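(* Let $\mathfrak S=(\mathcal S,\mathcal U,T_{\mathfrak s})$ be a controlled Markov process with parity specification $\mathit{Parity}(\mathcal P)$, $\mathcal P=\langle B_1,\dots,B_\ell\rangle$, and let $\langle\mathcal G,\widehat{\mathcal P}\rangle$ be the abstract $2\frac12$-player parity game induced by $\mathfrak S$ (for a given priority-consistent finite partition $\widehat{\mathcal S}$ and given functions $\overline F,\underline F$ as described in the context). Suppose $\widehat s\in V_0$ and $\pi_0$ is a deterministic memoryless strategy of Player 0 such that for every strategy $\pi_1$ of Player 1, $P_{\widehat s}^{\pi_0,\pi_1}(\mathcal G\models\mathit{Parity}(\widehat{\mathcal P}))=1$. Then the refinement $\rho$ of $\pi_0$ satisfies $\widehat s\subseteq\mathsf{WinDom}(\mathfrak S,\rho)$.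
   Context: CMP: $\mathfrak S=(\mathcal S,\mathcal U,T_{\mathfrak s})$ with $\mathcal S$ a Borel space, $\mathcal U$ finite, and $T_{\mathfrak s}(\cdot\mid s,u)$ a probability measure on the Borel sets of $\mathcal S$ for each $s,u$. A stationary policy is a universally measurable $\rho:\mathcal S\to\mathcal U$; $P_s^\rho$ is the induced measure on infinite paths $(s^0,s^1,\dots)$ with $s^0=s$, $s^{k+1}\sim T_{\mathfrak s}(\cdot\mid s^k,\rho(s^k))$. $\mathcal P=\langle B_1,\dots,B_\ell\rangle$ is a partition of $\mathcal S$ into measurable sets (some possibly empty); a sequence satisfies $\mathit{Parity}(\mathcal P)$ iff for every odd $i$, if $B_i$ is visited infinitely often then some $B_j$ with $j>i$ even is visited infinitely often. $\mathsf{WinDom}(\mathfrak S,\rho)=\{s\mid P_s^\rho(\mathfrak S\models\mathit{Parity}(\mathcal P))=1\}$. Abstraction: $\widehat{\mathcal S}$ is a finite partition of $\mathcal S$ into nonempty (measurable) cells such that each cell is contained in a single $B_i$. $Q:\mathcal S\to\widehat{\mathcal S}$ maps $s$ to the cell containing it; $Q^{-1}(\widehat U)=\bigcup_{\widehat s\in\widehat U}\widehat s$. Functions $\overline F,\underline F:\widehat{\mathcal S}\times\mathcal U\to 2^{\widehat{\mathcal S}}$ satisfy $\overline F(\widehat s,u)\supseteq\{\widehat s'\mid\exists s\in\widehat s.\ T_{\mathfrak s}(\widehat s'\mid s,u)>0\}$ and $\underline F(\widehat s,u)\subseteq\{\widehat s'\mid\exists\varepsilon>0\ \forall s\in\widehat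 s.\ T_{\mathfrak s}(\widehat s'\mid s,u)\ge\varepsilon\}$. Game graph $\mathcal G=\langle V,E,\langle V_0,V_1,V_r\rangle\rangle$: $V_0=\widehat{\mathcal S}$, $V_1=\widehat{\mathcal S}\times\mathcal U$, $V_r=\bigcup_{v_1\in V_1}V_r(v_1)$ where $V_r(v_1)=\{v_r\subseteq\widehat{\mathcal S}\mid\underline F(v_1)\subseteq v_r\subseteq\overline F(v_1),\ 1\le|v_r|\le|\underline F(v_1)|+1\}$; edges: $E(v_0)=\{(v_0,u)\mid u\in\mathcal U\}$ for $v_0\in V_0$, $E(v_1)=V_r(v_1)$ for $v_1\in V_1$, $E(v_r)=\{v_0\in V_0\mid v_0\in v_r\}$ for $v_r\in V_r$. At $V_0$ (resp. $V_1$) vertices Player 0 (resp. Player 1) chooses a successor; at $V_r$ vertices the successor is chosen uniformly at random. Strategies of Player $i$ are maps $\pi_i:V^*V_i\to\mathit{Dist}(V)$ supported on successors of the last vertex; a deterministic memoryless Player 0 strategy assigns to each $v_0\in V_0$ a single successor $\pi_0(v_0)=(v_0,u)$. $P_v^{\pi_0,\pi_1}$ is the induced measure on runs. The abstract parity specification is $\widehat{\mathcal P}=\langle\widehat B_1,\dots,\widehat B_\ell\rangle$ with $\widehat B_i=\{v_0\in V_0\mid Q^{-1}(v_0)\subseteq B_i\}$; a run of $\mathcal G$ satisfies a specification over $V_0$ (here $\mathit{Parity}(\widehat{\mathcal P})$) iff its projection onto the subsequence of $V_0$-vertices satisfies it. Refinement: the refinement of a deterministic memoryless $\pi_0$ is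 the policy $\rho$ with $\rho(s)=u$ whenever $s\in\widehat s$ and $\pi_0(\widehat s)=(\widehat s,u)$. *)

theory Defs
  imports "HOL-Probability.Probability"
begin

definition parity :: "nat \<Rightarrow> (nat \<Rightarrow> 'a set) \<Rightarrow> 'a stream \<Rightarrow> bool" where
  "parity l C \<omega> \<longleftrightarrow>
     (\<forall>i\<in>{1..l}. odd i \<longrightarrow> (INFM n. \<omega> !! n \<in> C i) \<longrightarrow>
        (\<exists>j\<in>{1..l}. even j \<and> i < j \<and> (INFM n. \<omega> !! n \<in> C j)))"

definition is_CMP :: "('s::polish_space \<Rightarrow> 'u::finite \<Rightarrow> 's measure) \<Rightarrow> bool" where
  "is_CMP T \<longleftrightarrow> (\<forall>s u. prob_space (T s u) \<and> sets (T s u) = sets borel) \<and>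
                 (\<forall>u. (\<lambda>s. T s u) \<in> borel \<rightarrow>\<^sub>M prob_algebra borel)"

definition is_priority_partition :: "nat \<Rightarrow> (nat \<Rightarrow> 's::polish_space set) \<Rightarrow> bool" where
  "is_priority_partition l B \<longleftrightarrow>
     (\<forall>i\<in>{1..l}. B i \<in> sets borel) \<and>
     (\<forall>i\<in>{1..l}. \<forall>j\<in>{1..l}. i \<noteq> j \<longrightarrow> B i \<inter> B j = {}) \<and>
     (\<Union>i\<in>{1..l}. B i) = UNIV"

text \<open>The path measure P_s^K of a Markov kernel K (here K s = T(. | s, rho s)):
a measurable family of probability measures on infinite paths starting in s, characterised by
the one-step unfolding  P_s = (s^1 ~ K s) ; (s ## path from s^1).  This equation determines the
family uniquely (by induction on finite-dimensional marginals); it is the Ionescu-Tulcea measure.\<close>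
definition is_path_measure :: "('s::polish_space \<Rightarrow> 's measure) \<Rightarrow> ('s \<Rightarrow> 's stream measure) \<Rightarrow> bool" where
  "is_path_measure K P \<longleftrightarrow>
     P \<in> borel \<rightarrow>\<^sub>M prob_algebra (stream_space borel) \<and>
     (\<forall>s. P s = K s \<bind> (\<lambda>t. distr (P t) (stream_space borel) (\<lambda>\<omega>. s ## \<omega>)))"

definition WinDom :: "nat \<Rightarrow> (nat \<Rightarrow> 's set) \<Rightarrow> ('s \<Rightarrow> 's stream measure) \<Rightarrow> 's set" where
  "WinDom l B P = {s. measure (P s) {\<omega>. parity l B \<omega>} = 1}"

definition is_abstraction :: "nat \<Rightarrow> (nat \<Rightarrow> 's::polish_space set) \<Rightarrow> 's set set \<Rightarrow> bool" where
  "is_abstraction l B Sh \<longleftrightarrow>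
     finite Sh \<and> (\<forall>c\<in>Sh. c \<noteq> {} \<and> c \<in> sets borel) \<and>
     (\<forall>c\<in>Sh. \<forall>c'\<in>Sh. c \<noteq> c' \<longrightarrow> c \<inter> c' = {}) \<and> \<Union>Sh = UNIV \<and>
     (\<forall>c\<in>Sh. \<exists>i\<in>{1..l}. c \<subseteq> B i)"

definition cell_of :: "'s set set \<Rightarrow> 's \<Rightarrow> 's set" where
  "cell_of Sh s = (THE c. c \<in> Sh \<and> s \<in> c)"

definition valid_F :: "('s::polish_space \<Rightarrow> 'u \<Rightarrow> 's measure) \<Rightarrow> 's set set
     \<Rightarrow> ('s set \<Rightarrow> 'u \<Rightarrow> 's set set) \<Rightarrow> ('s set \<Rightarrow> 'u \<Rightarrow> 's set set) \<Rightarrow> bool" where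
  "valid_F T Sh Fo Fu \<longleftrightarrow>
     (\<forall>c\<in>Sh. \<forall>u.
        Fo c u \<subseteq> Sh \<and> Fu c u \<subseteq> Sh \<and>
        {c'\<in>Sh. \<exists>s\<in>c. measure (T s u) c' > 0} \<subseteq> Fo c u \<and>
        Fu c u \<subseteq> {c'\<in>Sh. \<exists>\<epsilon>>0. \<forall>s\<in>c. measure (T s u) c' \<ge> \<epsilon>})"

datatype ('s, 'u) gvert = GV0 "'s set" | GV1 "'s set" 'u | GVr "'s set set"

definition Vr_of :: "('s set \<Rightarrow> 'u \<Rightarrow> 's set set) \<Rightarrow> ('s set \<Rightarrow> 'u \<Rightarrow> 's set set)
     \<Rightarrow> 's set \<Rightarrow> 'u \<Rightarrow> 's set set set" where
  "Vr_of Fo Fu c u = {R. Fu c u \<subseteq> R \<and> R \<subseteq> Fo c u \<and> 1 \<le> card R \<and> card R \<le> card (Fu c u) + 1}"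

fun gsucc :: "('s set \<Rightarrow> 'u \<Rightarrow> 's set set) \<Rightarrow> ('s set \<Rightarrow> 'u \<Rightarrow> 's set set)
     \<Rightarrow> ('s, 'u) gvert \<Rightarrow> ('s, 'u) gvert set" where
  "gsucc Fo Fu (GV0 c) = {GV1 c u | u. True}"
| "gsucc Fo Fu (GV1 c u) = GVr ` Vr_of Fo Fu c u"
| "gsucc Fo Fu (GVr R) = GV0 ` R"

definition p1_strategy :: "'s set set \<Rightarrow> ('s set \<Rightarrow> 'u \<Rightarrow> 's set set) \<Rightarrow> ('s set \<Rightarrow> 'u \<Rightarrow> 's set set)
     \<Rightarrow> (('s, 'u) gvert list \<Rightarrow> ('s, 'u) gvert pmf) \<Rightarrow> bool" where
  "p1_strategy Sh Fo Fu \<pi>1 \<longleftrightarrow>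
     (\<forall>h c u. c \<in> Sh \<longrightarrow> set_pmf (\<pi>1 (h @ [GV1 c u])) \<subseteq> gsucc Fo Fu (GV1 c u))"

text \<open>One-step distribution after history h, for a deterministic memoryless Player 0 strategy
sigma (pi_0(c) = (c, sigma c)), a Player 1 strategy pi1, and uniform choice at random vertices.\<close>
definition gstep :: "('s set \<Rightarrow> 'u) \<Rightarrow> (('s, 'u) gvert list \<Rightarrow> ('s, 'u) gvert pmf)
     \<Rightarrow> ('s, 'u) gvert list \<Rightarrow> ('s, 'u) gvert pmf" where
  "gstep \<sigma> \<pi>1 h = (case last h of
       GV0 c \<Rightarrow> return_pmf (GV1 c (\<sigma> c))
     | GV1 c u \<Rightarrow> \<pi>1 h
     | GVr R \<Rightarrow> pmf_of_set (GV0 ` R))"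

abbreviation gruns :: "('s, 'u) gvert stream measure" where
  "gruns \<equiv> stream_space (count_space UNIV)"

text \<open>Q h is the distribution of the continuation of the play after the (nonempty) history h.
It is characterised by the one-step unfolding equation (Ionescu-Tulcea).\<close>
definition is_hist_measure :: "(('s, 'u) gvert list \<Rightarrow> ('s, 'u) gvert pmf)
     \<Rightarrow> (('s, 'u) gvert list \<Rightarrow> ('s, 'u) gvert stream measure) \<Rightarrow> bool" where
  "is_hist_measure stp Q \<longleftrightarrow>
     (\<forall>h. h \<noteq> [] \<longrightarrow> prob_space (Q h) \<and> sets (Q h) = sets gruns \<and>
        Q h = measure_pmf (stp h) \<bind> (\<lambda>w. distr (Q (h @ [w])) gruns (\<lambda>\<omega>. w ## \<omega>)))"

definition run_measure :: "(('s, 'u) gvert list \<Rightarrow> ('s, 'u) gvert stream measure)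
     \<Rightarrow> ('s, 'u) gvert \<Rightarrow> ('s, 'u) gvert stream measure" where
  "run_measure Q v = distr (Q [v]) gruns (\<lambda>\<omega>. v ## \<omega>)"

definition Bhat :: "'s set set \<Rightarrow> (nat \<Rightarrow> 's set) \<Rightarrow> nat \<Rightarrow> ('s, 'u) gvert set" where
  "Bhat Sh B i = GV0 ` {c \<in> Sh. c \<subseteq> B i}"

definition refine :: "'s set set \<Rightarrow> ('s set \<Rightarrow> 'u) \<Rightarrow> 's \<Rightarrow> 'u" where
  "refine Sh \<sigma> s = \<sigma> (cell_of Sh s)"

end

theory Submission
  imports Defs
begin

(* Suppose some s in c were won with probability less than 1 under the refined policy. Almost
   every path of the process moves between cells only along Fo-edges of sigma and, from each cell
   it visits infinitely often, takes every Fu-edge infinitely often, since such an edge has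
   probability at least some epsilon > 0 from every state of the cell. So there is a losing path
   whose recurrent cells form a set C that is closed under Fu, strongly connected by Fo-edges,
   reachable from c, and whose maximal priority is odd, attained at a cell m.

   Player 1 answers by adding to Fu(d) one Fo-successor of d on a shortest path to m. Once inside C
   the play never leaves it, and every block of L consecutive random choices that all pick the
   preferred successor leads it to m; such a block has probability at least (1/|Sh|)^L. Realising
   the random choices by i.i.d. uniform variables yields a history measure for this strategy, under
   which the play enters C and visits m infinitely often with probability at least (1/|Sh|)^L, so
   Player 0 loses with positive probability. *)

section \<open>Sampling a countable distribution from a uniform variable\<close>

definition unit_uniform :: "real measure" where
  "unit_uniform = uniform_measure lborel {0..<1}"

lemma sets_unit_uniform[simp, measurable_cong]: "sets unit_uniform = sets borel"
  and space_unit_uniform[simp]: "space unit_uniform = UNIV"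
  by (auto simp: unit_uniform_def)

lemma prob_space_unit_uniform: "prob_space unit_uniform"
  unfolding unit_uniform_def by (rule prob_space_uniform_measure) auto

lemma emeasure_unit_uniform:
  "A \<in> sets borel \<Longrightarrow> emeasure unit_uniform A = emeasure lborel ({0..<1} \<inter> A)"
  unfolding unit_uniform_def by (simp add: divide_ennreal_def)

lemma emeasure_unit_uniform_less:
  assumes "0 \<le> d" "d \<le> 1"
  shows "emeasure unit_uniform {x. x < d} = ennreal d"
proof -
  have "{0..<1} \<inter> {x::real. x < d} = {0..<d}" using assms by auto
  then show ?thesis using assms by (simp add: emeasure_unit_uniform)
qed

definition nat_pmf_cdf :: "nat pmf \<Rightarrow> nat \<Rightarrow> real" where
  "nat_pmf_cdf q n = (\<Sum>i<n. pmf q i)"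

lemma nat_pmf_cdf_eq_measure: "nat_pmf_cdf q n = measure (measure_pmf q) {..<n}"
  unfolding nat_pmf_cdf_def by (simp add: measure_measure_pmf_finite)

lemma nat_pmf_cdf_mono: "m \<le> n \<Longrightarrow> nat_pmf_cdf q m \<le> nat_pmf_cdf q n"
  unfolding nat_pmf_cdf_def by (rule sum_mono2) auto

lemma nat_pmf_cdf_bounds: "0 \<le> nat_pmf_cdf q n" "nat_pmf_cdf q n \<le> 1"
  unfolding nat_pmf_cdf_eq_measure by simp_all

lemma nat_pmf_cdf_tendsto_1: "nat_pmf_cdf q \<longlonglongrightarrow> 1"
proof -
  have "(\<lambda>n. measure (measure_pmf q) {..<n}) \<longlonglongrightarrow> measure (measure_pmf q) (\<Union>n. {..<n})"
    by (rule measure_pmf.finite_Lim_measure_incseq) (auto simp: incseq_def)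
  moreover have "(\<Union>n. {..<n::nat}) = UNIV" by auto
  ultimately show ?thesis unfolding nat_pmf_cdf_eq_measure[abs_def] by simp
qed

text \<open>For \<open>x \<ge> 1\<close> the \<open>LEAST\<close> ranges over an empty set (junk value); this is a null set of
  \<open>unit_uniform\<close>.\<close>

definition nat_pmf_quantile :: "nat pmf \<Rightarrow> real \<Rightarrow> nat" where
  "nat_pmf_quantile q x = (LEAST n. x < nat_pmf_cdf q (Suc n))"

lemma measurable_nat_pmf_quantile[measurable]:
  "nat_pmf_quantile q \<in> borel \<rightarrow>\<^sub>M count_space UNIV"
  unfolding nat_pmf_quantile_def by measurable

lemma Least_nat_eq_iff:
  fixes P :: "nat \<Rightarrow> bool"
  assumes "P k"
  shows "(LEAST n. P n) = n \<longleftrightarrow> P n \<and> (\<forall>m<n. \<not> P m)"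
proof
  assume n: "(LEAST n. P n) = n"
  show "P n \<and> (\<forall>m<n. \<not> P m)"
    unfolding n[symmetric] using LeastI[of P k, OF assms] not_less_Least[of _ P] by blast
next
  assume "P n \<and> (\<forall>m<n. \<not> P m)"
  then show "(LEAST n. P n) = n" by (intro Least_equality) (auto simp: not_less[symmetric])
qed

lemma nat_pmf_cdf_le_iff:
  assumes "0 \<le> x"
  shows "(\<forall>m<n. nat_pmf_cdf q (Suc m) \<le> x) \<longleftrightarrow> nat_pmf_cdf q n \<le> x"
proof (cases n)
  case 0
  then show ?thesis using assms by (simp add: nat_pmf_cdf_def)
next
  case (Suc n')
  show ?thesis
  proof (intro iffI allI impI)
    assume "\<forall>m<n. nat_pmf_cdf q (Suc m) \<le> x"
    then show "nat_pmf_cdf q n \<le> x" using Suc by blast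
  next
    fix m assume "nat_pmf_cdf q n \<le> x" "m < n"
    then show "nat_pmf_cdf q (Suc m) \<le> x" using nat_pmf_cdf_mono[of "Suc m" n q] by simp
  qed
qed

lemma nat_pmf_quantile_eq_iff:
  assumes x: "x \<in> {0..<1}"
  shows "nat_pmf_quantile q x = n \<longleftrightarrow> nat_pmf_cdf q n \<le> x \<and> x < nat_pmf_cdf q (Suc n)"
proof -
  have "eventually (\<lambda>k. x < nat_pmf_cdf q k) sequentially"
    using x by (intro order_tendstoD(1)[OF nat_pmf_cdf_tendsto_1]) auto
  then obtain k where "\<forall>j\<ge>k. x < nat_pmf_cdf q j"
    by (auto simp: eventually_sequentially)
  then have k: "x < nat_pmf_cdf q (Suc k)" by simp
  show ?thesis
    unfolding nat_pmf_quantile_def Least_nat_eq_iff[of "\<lambda>n. x < nat_pmf_cdf q (Suc n)", OF k]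
    using nat_pmf_cdf_le_iff[of x n q] x by (auto simp: not_less)
qed

lemma distr_nat_pmf_quantile:
  "distr unit_uniform (count_space UNIV) (nat_pmf_quantile q) = measure_pmf q"
proof (rule measure_eqI_countable[where A=UNIV])
  fix n :: nat
  have preimage: "{0..<1} \<inter> nat_pmf_quantile q -` {n} = {nat_pmf_cdf q n..<nat_pmf_cdf q (Suc n)}"
  proof (intro set_eqI iffI)
    fix x assume "x \<in> {0..<1} \<inter> nat_pmf_quantile q -` {n}"
    then show "x \<in> {nat_pmf_cdf q n..<nat_pmf_cdf q (Suc n)}"
      using nat_pmf_quantile_eq_iff by auto
  next
    fix x assume x: "x \<in> {nat_pmf_cdf q n..<nat_pmf_cdf q (Suc n)}"
    then have "x \<in> {0..<1}"
      using nat_pmf_cdf_bounds[of q n] nat_pmf_cdf_bounds[of q "Suc n"] by auto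
    with x show "x \<in> {0..<1} \<inter> nat_pmf_quantile q -` {n}"
      using nat_pmf_quantile_eq_iff by auto
  qed
  have "nat_pmf_quantile q -` {n} \<in> sets borel"
    using measurable_sets[OF measurable_nat_pmf_quantile, of "{n}"] by simp
  then have "emeasure (distr unit_uniform (count_space UNIV) (nat_pmf_quantile q)) {n} =
      emeasure lborel ({0..<1} \<inter> nat_pmf_quantile q -` {n})"
    by (simp add: emeasure_distr emeasure_unit_uniform)
  also have "\<dots> = ennreal (nat_pmf_cdf q (Suc n) - nat_pmf_cdf q n)"
    using nat_pmf_cdf_mono[of n "Suc n" q] by (subst preimage) simp
  also have "\<dots> = emeasure (measure_pmf q) {n}"
    by (simp add: nat_pmf_cdf_def emeasure_pmf_single)
  finally show "emeasure (distr unit_uniform (count_space UNIV) (nat_pmf_quantile q)) {n} =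
      emeasure (measure_pmf q) {n}" .
qed auto

lemma nat_pmf_quantile_eq_0: "x < pmf q 0 \<Longrightarrow> nat_pmf_quantile q x = 0"
  unfolding nat_pmf_quantile_def nat_pmf_cdf_def by (auto intro!: Least_equality)

text \<open>\<open>sample p a\<close> enumerates the support of \<open>p\<close> with \<open>a\<close> first, so that \<open>a\<close> is drawn whenever
  the uniform variable is below \<open>pmf p a\<close>.\<close>

definition sample_index :: "'a pmf \<Rightarrow> 'a \<Rightarrow> 'a \<Rightarrow> nat" where
  "sample_index p a b = (if b = a then 0 else Suc (to_nat_on (set_pmf p) b))"

definition sample_of_index :: "'a pmf \<Rightarrow> 'a \<Rightarrow> nat \<Rightarrow> 'a" where
  "sample_of_index p a n =
     (if n = 0 \<and> a \<in> set_pmf p then a else from_nat_into (set_pmf p) (n - 1))"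

definition sample :: "'a pmf \<Rightarrow> 'a \<Rightarrow> real \<Rightarrow> 'a" where
  "sample p a x = sample_of_index p a (nat_pmf_quantile (map_pmf (sample_index p a) p) x)"

lemma sample_in_set_pmf: "sample p a x \<in> set_pmf p"
  unfolding sample_def sample_of_index_def using set_pmf_not_empty[of p]
  by (auto intro: from_nat_into)

lemma measurable_sample[measurable]: "sample p a \<in> unit_uniform \<rightarrow>\<^sub>M count_space UNIV"
  unfolding sample_def by measurable

lemma distr_sample: "distr unit_uniform (count_space UNIV) (sample p a) = measure_pmf p"
proof -
  have inverse: "b \<in> set_pmf p \<Longrightarrow> sample_of_index p a (sample_index p a b) = b" for b
    unfolding sample_of_index_def sample_index_def by (auto simp: countable_set_pmf)
  have "distr unit_uniform (count_space UNIV) (sample p a) =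
      distr (distr unit_uniform (count_space UNIV) (nat_pmf_quantile (map_pmf (sample_index p a) p)))
        (count_space UNIV) (sample_of_index p a)"
    unfolding sample_def by (subst distr_distr) (auto simp: comp_def)
  also have "\<dots> = measure_pmf (map_pmf (sample_of_index p a) (map_pmf (sample_index p a) p))"
    by (simp add: distr_nat_pmf_quantile map_pmf_rep_eq)
  also have "map_pmf (sample_of_index p a) (map_pmf (sample_index p a) p) = p"
    by (simp add: pmf.map_comp comp_def inverse map_pmf_idI)
  finally show ?thesis .
qed

lemma sample_eq_preferred: "a \<in> set_pmf p \<Longrightarrow> x < pmf p a \<Longrightarrow> sample p a x = a"
proof -
  assume a: "a \<in> set_pmf p" and x: "x < pmf p a"
  have "pmf p a \<le> pmf (map_pmf (sample_index p a) p) 0"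
    by (subst pmf_map)
      (auto simp: sample_index_def measure_pmf_single[symmetric] intro!: measure_pmf.finite_measure_mono)
  then show ?thesis
    using a x by (simp add: sample_def sample_of_index_def nat_pmf_quantile_eq_0)
qed

section \<open>Blocks of small values in an i.i.d. uniform stream\<close>

abbreviation uniform_streams :: "real stream measure" where
  "uniform_streams \<equiv> stream_space unit_uniform"

lemma space_uniform_streams[simp]: "space uniform_streams = UNIV"
  by (simp add: space_stream_space)

lemma prob_space_uniform_streams: "prob_space uniform_streams"
  using prob_space_unit_uniform by (rule prob_space.prob_space_stream_space)

lemma sets_uniform_streams_Collect:
  "Measurable.pred uniform_streams P \<Longrightarrow> {\<omega>. P \<omega>} \<in> sets uniform_streams"
  by (simp add: pred_def)

lemma emeasure_uniform_streams_shd_stl: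
  assumes [measurable]: "A \<in> sets borel" "Y \<in> sets uniform_streams"
  shows "emeasure uniform_streams {\<omega>. shd \<omega> \<in> A \<and> stl \<omega> \<in> Y} =
    emeasure unit_uniform A * emeasure uniform_streams Y"
proof -
  have "emeasure uniform_streams {\<omega>. shd \<omega> \<in> A \<and> stl \<omega> \<in> Y} =
      (\<integral>\<^sup>+t. emeasure uniform_streams {x. t ## x \<in> {\<omega>. shd \<omega> \<in> A \<and> stl \<omega> \<in> Y}} \<partial>unit_uniform)"
    by (subst prob_space.emeasure_stream_space[OF prob_space_unit_uniform])
      (auto intro: sets_uniform_streams_Collect)
  also have "\<dots> = (\<integral>\<^sup>+t. emeasure uniform_streams Y * indicator A t \<partial>unit_uniform)"
    by (intro nn_integral_cong) (auto split: split_indicator)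
  also have "\<dots> = emeasure uniform_streams Y * emeasure unit_uniform A"
    by (rule nn_integral_cmult_indicator) simp
  finally show ?thesis by (simp add: mult.commute)
qed

lemma emeasure_uniform_streams_sdrop:
  assumes [measurable]: "Y \<in> sets uniform_streams"
  shows "emeasure uniform_streams {\<omega>. sdrop n \<omega> \<in> Y} = emeasure uniform_streams Y"
proof (induction n)
  case (Suc n)
  have "{\<omega>. sdrop (Suc n) \<omega> \<in> Y} = {\<omega>. shd \<omega> \<in> UNIV \<and> stl \<omega> \<in> {\<omega>. sdrop n \<omega> \<in> Y}}"
    by simp
  also have "emeasure uniform_streams \<dots> = emeasure uniform_streams {\<omega>. sdrop n \<omega> \<in> Y}"
    by (subst emeasure_uniform_streams_shd_stl)
      (auto intro: sets_uniform_streams_Collect simp: prob_space.emeasure_space_1[OF prob_space_unit_uniform, simplified])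
  finally show ?case using Suc by simp
qed simp

definition block_below :: "nat \<Rightarrow> real \<Rightarrow> real stream \<Rightarrow> bool" where
  "block_below L d \<omega> \<longleftrightarrow> (\<forall>i<L. \<omega> !! i < d)"

lemma measurable_block_below[measurable]: "Measurable.pred uniform_streams (block_below L d)"
  unfolding block_below_def by measurable

lemma emeasure_block_below:
  assumes "0 \<le> d" "d \<le> 1" and [measurable]: "Y \<in> sets uniform_streams"
  shows "emeasure uniform_streams {\<omega>. block_below L d \<omega> \<and> sdrop L \<omega> \<in> Y} =
    ennreal (d ^ L) * emeasure uniform_streams Y"
proof (induction L)
  case 0 then show ?case by (simp add: block_below_def)
next
  case (Suc L)
  have "{\<omega>. block_below (Suc L) d \<omega> \<and> sdrop (Suc L) \<omega> \<in> Y} =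
        {\<omega>. shd \<omega> \<in> {x. x < d} \<and> stl \<omega> \<in> {\<omega>. block_below L d \<omega> \<and> sdrop L \<omega> \<in> Y}}"
    by (auto simp: block_below_def less_Suc_eq_0_disj)
  also have "emeasure uniform_streams \<dots> = ennreal d * (ennreal (d ^ L) * emeasure uniform_streams Y)"
    using Suc assms
    by (subst emeasure_uniform_streams_shd_stl)
      (auto intro: sets_uniform_streams_Collect simp: emeasure_unit_uniform_less)
  finally show ?case using assms by (simp add: ennreal_mult' mult.assoc)
qed

definition io_blocks_below :: "nat \<Rightarrow> real \<Rightarrow> real stream set" where
  "io_blocks_below L d = {\<omega>. \<exists>\<^sub>\<infinity>k. block_below L d (sdrop (k * L) \<omega>)}"

lemma sets_io_blocks_below[measurable]: "io_blocks_below L d \<in> sets uniform_streams"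
  unfolding io_blocks_below_def INFM_nat by (intro sets_uniform_streams_Collect) measurable

definition no_block_below :: "nat \<Rightarrow> real \<Rightarrow> real stream set" where
  "no_block_below L d = {\<omega>. \<forall>k. \<not> block_below L d (sdrop (k * L) \<omega>)}"

lemma sets_no_block_below[measurable]: "no_block_below L d \<in> sets uniform_streams"
  unfolding no_block_below_def by (intro sets_uniform_streams_Collect) measurable

lemma no_block_below_iff:
  "\<omega> \<in> no_block_below L d \<longleftrightarrow> \<not> block_below L d \<omega> \<and> sdrop L \<omega> \<in> no_block_below L d"
proof -
  have shift: "sdrop (Suc k * L) \<omega> = sdrop (k * L) (sdrop L \<omega>)" for k
    by simp
  have all_Suc: "(\<forall>k. P k) \<longleftrightarrow> P 0 \<and> (\<forall>k. P (Suc k))" for P :: "nat \<Rightarrow> bool"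
  proof (intro iffI conjI allI)
    fix k assume "P 0 \<and> (\<forall>k. P (Suc k))"
    then show "P k" by (cases k) simp_all
  qed simp_all
  show ?thesis
    unfolding no_block_below_def mem_Collect_eq
    by (subst all_Suc) (simp only: shift mult_0 sdrop.simps(1))
qed

lemma emeasure_no_block_below:
  assumes "0 < d" "d \<le> 1"
  shows "emeasure uniform_streams (no_block_below L d) = 0"
proof -
  interpret S: prob_space uniform_streams by (rule prob_space_uniform_streams)
  let ?N = "no_block_below L d"
  let ?B = "{\<omega>. block_below L d \<omega> \<and> sdrop L \<omega> \<in> ?N}"
  have B: "?B \<in> sets uniform_streams" by (intro sets_uniform_streams_Collect) measurable
  have "{\<omega>. sdrop L \<omega> \<in> ?N} = ?N \<union> ?B" "?N \<inter> ?B = {}"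
    using no_block_below_iff[of _ L d] by blast+
  then have "emeasure uniform_streams ?N + 0 = emeasure uniform_streams ?N + emeasure uniform_streams ?B"
    using emeasure_uniform_streams_sdrop[OF sets_no_block_below, of L L d] plus_emeasure[OF sets_no_block_below B]
    by simp
  also have "emeasure uniform_streams ?B = ennreal (d ^ L) * emeasure uniform_streams ?N"
    using assms by (intro emeasure_block_below) auto
  finally have "ennreal (d ^ L) * emeasure uniform_streams ?N = 0"
    using S.emeasure_finite[of ?N] by (simp only: ennreal_add_left_cancel) simp
  then show ?thesis using assms by simp
qed

lemma AE_io_blocks_below:
  assumes "0 < d" "d \<le> 1"
  shows "AE \<omega> in uniform_streams. \<omega> \<in> io_blocks_below L d"
proof -
  have "AE \<omega> in uniform_streams. sdrop (j * L) \<omega> \<notin> no_block_below L d" for j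
  proof (rule AE_I')
    show "{\<omega>. sdrop (j * L) \<omega> \<in> no_block_below L d} \<in> null_sets uniform_streams"
      using emeasure_uniform_streams_sdrop[OF sets_no_block_below, of "j * L" L d]
        emeasure_no_block_below[OF assms, of L]
      by (auto simp: null_sets_def intro: sets_uniform_streams_Collect)
  qed auto
  then have "AE \<omega> in uniform_streams. \<forall>j. \<exists>k. block_below L d (sdrop ((k + j) * L) \<omega>)"
    by (simp add: AE_all_countable no_block_below_def sdrop_add algebra_simps)
  then show ?thesis
  proof (rule eventually_mono)
    fix \<omega> assume "\<forall>j. \<exists>k. block_below L d (sdrop ((k + j) * L) \<omega>)"
    then have "\<forall>j. \<exists>k\<ge>j. block_below L d (sdrop (k * L) \<omega>)"
      using le_add2 by blast
    then show "\<omega> \<in> io_blocks_below L d"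
      unfolding io_blocks_below_def INFM_nat_le by simp
  qed
qed

lemma measure_block_below_io:
  assumes "0 < d" "d \<le> 1"
  shows "measure uniform_streams ({\<omega>. block_below L d \<omega>} \<inter> io_blocks_below L d) = d ^ L"
proof -
  interpret S: prob_space uniform_streams by (rule prob_space_uniform_streams)
  have [measurable]: "{\<omega>. block_below L d \<omega>} \<in> sets uniform_streams"
    by (intro sets_uniform_streams_Collect) measurable
  have "emeasure uniform_streams ({\<omega>. block_below L d \<omega>} \<inter> io_blocks_below L d) =
      emeasure uniform_streams {\<omega>. block_below L d \<omega> \<and> sdrop L \<omega> \<in> UNIV}"
    using AE_io_blocks_below[OF assms, of L] by (intro emeasure_eq_AE) auto
  also have "\<dots> = ennreal (d ^ L)"
    using emeasure_block_below[of d UNIV L] assms S.emeasure_space_1 sets.top[of uniform_streams]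
    by simp
  finally show ?thesis using assms by (simp add: S.emeasure_eq_measure)
qed

section \<open>A history measure driven by uniform variables\<close>

primcorec history_run :: "('v list \<Rightarrow> 'r \<Rightarrow> 'v) \<Rightarrow> 'v list \<Rightarrow> 'r stream \<Rightarrow> 'v stream" where
  "history_run g h xs = g h (shd xs) ## history_run g (h @ [g h (shd xs)]) (stl xs)"

lemma history_run_Stream: "history_run g h (x ## xs) = g h x ## history_run g (h @ [g h x]) xs"
  by (subst history_run.ctr) simp

lemma snth_history_run: "history_run g h xs !! n = g (h @ stake n (history_run g h xs)) (xs !! n)"
proof (induction n arbitrary: h xs)
  case 0 then show ?case by (subst history_run.ctr) simp
next
  case (Suc n) show ?case by (subst (1 2) history_run.ctr) (simp add: Suc)
qed

abbreviation sampled_run :: "('v list \<Rightarrow> 'v pmf) \<Rightarrow> ('v list \<Rightarrow> 'v) \<Rightarrow> 'v list \<Rightarrow> real stream \<Rightarrow> 'v stream" where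
  "sampled_run stp pref \<equiv> history_run (\<lambda>h. sample (stp h) (pref h))"

lemma measurable_sample_shd:
  "(\<lambda>xs. sample p a (shd xs)) \<in> uniform_streams \<rightarrow>\<^sub>M count_space (set_pmf p)"
proof -
  have "(\<lambda>xs. sample p a (shd xs)) \<in> uniform_streams \<rightarrow>\<^sub>M restrict_space (count_space UNIV) (set_pmf p)"
    by (intro measurable_restrict_space2) (auto simp: sample_in_set_pmf)
  then show ?thesis by (simp add: restrict_count_space)
qed

lemma measurable_snth_sampled_run:
  "(\<lambda>xs. sampled_run stp pref h xs !! n) \<in> uniform_streams \<rightarrow>\<^sub>M count_space UNIV"
proof (induction n arbitrary: h)
  case 0
  show ?case by simp
next
  case (Suc n)
  let ?v = "\<lambda>xs. sample (stp h) (pref h) (shd xs)"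
  have "(\<lambda>xs. (\<lambda>w xs. sampled_run stp pref (h @ [w]) (stl xs) !! n) (?v xs) xs)
      \<in> uniform_streams \<rightarrow>\<^sub>M count_space UNIV"
  proof (rule measurable_compose_countable'[OF _ measurable_sample_shd])
    fix w
    show "(\<lambda>xs. sampled_run stp pref (h @ [w]) (stl xs) !! n) \<in> uniform_streams \<rightarrow>\<^sub>M count_space UNIV"
      using measurable_compose[OF measurable_stl Suc.IH[of "h @ [w]"]] by simp
  qed (simp add: countable_set_pmf)
  then show ?case by simp
qed

lemma measurable_sampled_run[measurable]:
  "sampled_run stp pref h \<in> uniform_streams \<rightarrow>\<^sub>M stream_space (count_space UNIV)"
  by (rule measurable_stream_space2) (rule measurable_snth_sampled_run)

definition sampled_hist_measure :: "('v list \<Rightarrow> 'v pmf) \<Rightarrow> ('v list \<Rightarrow> 'v) \<Rightarrow> 'v list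
    \<Rightarrow> 'v stream measure" where
  "sampled_hist_measure stp pref h =
     distr uniform_streams (stream_space (count_space UNIV)) (sampled_run stp pref h)"

lemma prob_space_sampled_hist_measure: "prob_space (sampled_hist_measure stp pref h)"
  unfolding sampled_hist_measure_def
  by (rule prob_space.prob_space_distr[OF prob_space_uniform_streams measurable_sampled_run])

lemma sets_sampled_hist_measure[simp, measurable_cong]:
  "sets (sampled_hist_measure stp pref h) = sets (stream_space (count_space UNIV))"
  by (simp add: sampled_hist_measure_def)

lemma sampled_hist_measure_unfold:
  "sampled_hist_measure stp pref h = measure_pmf (stp h) \<bind>
     (\<lambda>w. distr (sampled_hist_measure stp pref (h @ [w])) (stream_space (count_space UNIV)) (\<lambda>\<omega>. w ## \<omega>))"
  (is "?Q h = bind _ ?G")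
proof (rule measure_eqI)
  let ?S = "stream_space (count_space UNIV)"
  have "prob_space (?G w)" for w
    by (rule prob_space.prob_space_distr[OF prob_space_sampled_hist_measure]) measurable
  then have "?G \<in> count_space UNIV \<rightarrow>\<^sub>M subprob_algebra ?S"
    by (auto simp: space_subprob_algebra prob_space_imp_subprob_space)
  then have G: "?G \<in> measure_pmf (stp h) \<rightarrow>\<^sub>M subprob_algebra ?S"
    by (simp add: measurable_cong_sets[OF sets_measure_pmf_count_space refl])
  show "sets (?Q h) = sets (measure_pmf (stp h) \<bind> ?G)"
    by (subst sets_bind) auto
  fix A assume "A \<in> sets (?Q h)"
  then have A[measurable]: "A \<in> sets ?S" by simp
  have "emeasure (?Q h) A = emeasure uniform_streams (sampled_run stp pref h -` A)"
    unfolding sampled_hist_measure_def by (subst emeasure_distr) auto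
  also have "\<dots> = (\<integral>\<^sup>+t. emeasure uniform_streams
      {xs. t ## xs \<in> sampled_run stp pref h -` A} \<partial>unit_uniform)"
    by (subst prob_space.emeasure_stream_space[OF prob_space_unit_uniform])
      (auto intro: measurable_sets[OF measurable_sampled_run A, simplified])
  also have "\<dots> = (\<integral>\<^sup>+t. emeasure (?G (sample (stp h) (pref h) t)) A \<partial>unit_uniform)"
  proof (intro nn_integral_cong)
    fix t
    let ?w = "sample (stp h) (pref h) t"
    have "emeasure (?G ?w) A = emeasure uniform_streams
        (sampled_run stp pref (h @ [?w]) -` ((\<lambda>\<omega>. ?w ## \<omega>) -` A \<inter> space ?S))"
      unfolding sampled_hist_measure_def
      by (subst emeasure_distr, measurable, subst emeasure_distr) (auto intro: measurable_sets)
    then show "emeasure uniform_streams {xs. t ## xs \<in> sampled_run stp pref h -` A} = emeasure (?G ?w) A"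
      by (simp add: history_run_Stream vimage_def space_stream_space)
  qed
  also have "\<dots> = (\<integral>\<^sup>+w. emeasure (?G w) A \<partial>distr unit_uniform (count_space UNIV) (sample (stp h) (pref h)))"
    by (subst nn_integral_distr) auto
  also have "\<dots> = emeasure (measure_pmf (stp h) \<bind> ?G) A"
    by (simp add: distr_sample emeasure_bind[OF _ G A])
  finally show "emeasure (?Q h) A = emeasure (measure_pmf (stp h) \<bind> ?G) A" .
qed

lemma is_hist_measure_sampled_hist_measure: "is_hist_measure stp (sampled_hist_measure stp pref)"
  unfolding is_hist_measure_def
  using prob_space_sampled_hist_measure sampled_hist_measure_unfold by auto

section \<open>Path measures of Markov kernels\<close>

text \<open>\<open>\<omega> \<in> unanswered_visits D D' k N\<close> iff the first \<open>k\<close> visits of \<open>\<omega>\<close> to \<open>D\<close> occur before position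
  \<open>N\<close> and none of them is immediately followed by a visit to \<open>D'\<close>.\<close>

fun unanswered_visits :: "'s set \<Rightarrow> 's set \<Rightarrow> nat \<Rightarrow> nat \<Rightarrow> 's stream set" where
  "unanswered_visits D D' k 0 = (if k = 0 then UNIV else {})"
| "unanswered_visits D D' k (Suc N) =
     {\<omega>. (shd \<omega> \<in> D \<and> (k = 0 \<or> (shd (stl \<omega>) \<notin> D' \<and> stl \<omega> \<in> unanswered_visits D D' (k - 1) N))) \<or>
        (shd \<omega> \<notin> D \<and> stl \<omega> \<in> unanswered_visits D D' k N)}"

lemma unanswered_visits_Suc_mono: "unanswered_visits D D' k N \<subseteq> unanswered_visits D D' k (Suc N)"
proof (induction N arbitrary: k)
  case (Suc N)
  then show ?case by fastforce
qed auto

definition visits :: "'s set \<Rightarrow> nat \<Rightarrow> 's stream \<Rightarrow> nat" where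
  "visits D N \<omega> = (\<Sum>n<N. if \<omega> !! n \<in> D then 1 else 0)"

lemma visits_Suc: "visits D (Suc N) \<omega> = (if shd \<omega> \<in> D then 1 else 0) + visits D N (stl \<omega>)"
  unfolding visits_def by (subst sum.lessThan_Suc_shift) simp

lemma in_unanswered_visits:
  assumes "\<forall>n. \<not> (\<omega> !! n \<in> D \<and> \<omega> !! Suc n \<in> D')" "k \<le> visits D N \<omega>"
  shows "\<omega> \<in> unanswered_visits D D' k N"
  using assms
proof (induction N arbitrary: k \<omega>)
  case 0 then show ?case by (simp add: visits_def)
next
  case (Suc N)
  have tail: "\<forall>n. \<not> (stl \<omega> !! n \<in> D \<and> stl \<omega> !! Suc n \<in> D')"
    using Suc.prems(1) by (metis snth.simps(2))
  show ?case
  proof (cases "shd \<omega> \<in> D")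
    case True
    have "shd (stl \<omega>) \<notin> D'" using Suc.prems(1) True by (metis snth.simps)
    moreover have "k - 1 \<le> visits D N (stl \<omega>)" using Suc.prems(2) True by (simp add: visits_Suc)
    ultimately show ?thesis using True Suc.IH[OF tail] by simp
  next
    case False
    then have "k \<le> visits D N (stl \<omega>)" using Suc.prems(2) by (simp add: visits_Suc)
    then show ?thesis using False Suc.IH[OF tail] by simp
  qed
qed

lemma visits_unbounded:
  assumes "\<exists>\<^sub>\<infinity>n. \<omega> !! n \<in> D"
  shows "\<exists>N. k \<le> visits D N \<omega>"
proof -
  obtain F where F: "finite F" "card F = k" "F \<subseteq> {n. \<omega> !! n \<in> D}"
    using assms infinite_arbitrarily_large by (metis INFM_iff_infinite)
  define N where "N = Suc (Max (insert 0 F))"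
  have "F \<subseteq> {..<N}" using F by (auto simp: N_def less_Suc_eq_le)
  have "k = (\<Sum>n\<in>F. 1::nat)" using F by simp
  also have "\<dots> = (\<Sum>n\<in>F. if \<omega> !! n \<in> D then 1 else 0)"
    using F(3) by (intro sum.cong) auto
  also have "\<dots> \<le> visits D N \<omega>"
    unfolding visits_def using \<open>F \<subseteq> {..<N}\<close> by (intro sum_mono2) auto
  finally show ?thesis by blast
qed

locale path_measure =
  fixes K :: "'s::polish_space \<Rightarrow> 's measure" and P :: "'s \<Rightarrow> 's stream measure"
  assumes prob_space_K: "\<And>s. prob_space (K s)"
    and sets_K[measurable_cong]: "\<And>s. sets (K s) = sets borel"
    and P_is_path_measure: "is_path_measure K P"
begin

abbreviation paths :: "'s stream measure" where "paths \<equiv> stream_space borel"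

lemma space_paths[simp]: "space paths = UNIV"
  by (simp add: space_stream_space)

lemma sets_paths_Collect: "Measurable.pred paths Q \<Longrightarrow> {\<omega>. Q \<omega>} \<in> sets paths"
  unfolding pred_def space_paths by simp

lemma measurable_P: "P \<in> borel \<rightarrow>\<^sub>M prob_algebra paths"
  and P_unfold: "P s = K s \<bind> (\<lambda>t. distr (P t) paths (\<lambda>\<omega>. s ## \<omega>))"
  using P_is_path_measure unfolding is_path_measure_def by blast+

lemma prob_space_P: "prob_space (P s)" and sets_P[simp, measurable_cong]: "sets (P s) = sets paths"
  using measurable_space[OF measurable_P, of s] by (auto simp: space_prob_algebra)

lemma space_P[simp]: "space (P s) = UNIV"
  using sets_eq_imp_space_eq[OF sets_P[of s]] by simp

lemma space_K[simp]: "space (K s) = UNIV"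
  using sets_eq_imp_space_eq[OF sets_K[of s]] by simp

lemma measurable_emeasure_P: "A \<in> sets paths \<Longrightarrow> (\<lambda>t. emeasure (P t) A) \<in> borel_measurable (K s)"
  using measurable_compose[OF measurable_prob_algebraD[OF measurable_P] measurable_emeasure_subprob_algebra]
  by (simp add: measurable_cong_sets[OF sets_K refl])

lemma emeasure_P_unfold:
  assumes X: "X \<in> sets paths"
  shows "emeasure (P s) X = (\<integral>\<^sup>+t. emeasure (P t) {\<omega>. s ## \<omega> \<in> X} \<partial>K s)"
proof -
  have G: "(\<lambda>t. distr (P t) paths (\<lambda>\<omega>. s ## \<omega>)) \<in> K s \<rightarrow>\<^sub>M subprob_algebra paths"
    using measurable_compose[OF measurable_prob_algebraD[OF measurable_P] measurable_distr, of "\<lambda>\<omega>. s ## \<omega>"]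
    by (simp add: measurable_cong_sets[OF sets_K refl])
  have "emeasure (P s) X = (\<integral>\<^sup>+t. emeasure (distr (P t) paths (\<lambda>\<omega>. s ## \<omega>)) X \<partial>K s)"
    by (subst P_unfold) (rule emeasure_bind[OF _ G X], simp)
  also have "\<dots> = (\<integral>\<^sup>+t. emeasure (P t) {\<omega>. s ## \<omega> \<in> X} \<partial>K s)"
    using X by (intro nn_integral_cong) (simp add: emeasure_distr vimage_def)
  finally show ?thesis .
qed

lemma emeasure_P_shd_stl:
  assumes [measurable]: "A \<in> sets borel" "Y \<in> sets paths"
  shows "emeasure (P s) {\<omega>. shd \<omega> \<in> A \<and> stl \<omega> \<in> Y} = indicator A s * (\<integral>\<^sup>+t. emeasure (P t) Y \<partial>K s)"
proof -
  have "emeasure (P s) {\<omega>. shd \<omega> \<in> A \<and> stl \<omega> \<in> Y} = (\<integral>\<^sup>+t. indicator A s * emeasure (P t) Y \<partial>K s)"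
    by (subst emeasure_P_unfold) (auto intro!: sets_paths_Collect nn_integral_cong split: split_indicator)
  also have "\<dots> = indicator A s * (\<integral>\<^sup>+t. emeasure (P t) Y \<partial>K s)"
    by (rule nn_integral_cmult[OF measurable_emeasure_P]) simp
  finally show ?thesis .
qed

lemma emeasure_P_stl:
  "Y \<in> sets paths \<Longrightarrow> emeasure (P s) {\<omega>. stl \<omega> \<in> Y} = (\<integral>\<^sup>+t. emeasure (P t) Y \<partial>K s)"
  using emeasure_P_shd_stl[of UNIV Y s] by simp

lemma emeasure_P_shd:
  assumes [measurable]: "A \<in> sets borel"
  shows "emeasure (P s) {\<omega>. shd \<omega> \<in> A} = indicator A s"
proof -
  have "(\<integral>\<^sup>+t. emeasure (P t) UNIV \<partial>K s) = 1"
    using prob_space.emeasure_space_1[OF prob_space_P] prob_space.emeasure_space_1[OF prob_space_K]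
    by simp
  then show ?thesis
    using emeasure_P_shd_stl[of A UNIV s] sets.top[of paths] by simp
qed

lemma emeasure_P_sdrop_null:
  assumes [measurable]: "E \<in> sets paths" and null: "\<And>t. emeasure (P t) E = 0"
  shows "emeasure (P s) {\<omega>. sdrop m \<omega> \<in> E} = 0"
proof (induction m arbitrary: s)
  case (Suc m)
  have "{\<omega>. sdrop (Suc m) \<omega> \<in> E} = {\<omega>. stl \<omega> \<in> {\<omega>. sdrop m \<omega> \<in> E}}" by simp
  then show ?case
    using emeasure_P_stl[of "{\<omega>. sdrop m \<omega> \<in> E}" s] Suc by (simp add: sets_paths_Collect)
qed (simp add: null)

lemma AE_P_never_step:
  assumes [measurable]: "D \<in> sets borel" "D' \<in> sets borel"
    and null: "\<And>s. s \<in> D \<Longrightarrow> emeasure (K s) D' = 0"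
  shows "AE \<omega> in P s. \<forall>n. \<not> (\<omega> !! n \<in> D \<and> \<omega> !! Suc n \<in> D')"
proof -
  have step: "emeasure (P s) {\<omega>. \<omega> !! n \<in> D \<and> \<omega> !! Suc n \<in> D'} = 0" for n
  proof (induction n arbitrary: s)
    case 0
    have "(\<integral>\<^sup>+t. emeasure (P t) {\<omega>. shd \<omega> \<in> D'} \<partial>K s) = emeasure (K s) D'"
      by (simp add: emeasure_P_shd)
    then show ?case
      using emeasure_P_shd_stl[of D "{\<omega>. shd \<omega> \<in> D'}" s] null[of s]
      by (auto simp: sets_paths_Collect split: split_indicator)
  next
    case (Suc n)
    have "{\<omega>. \<omega> !! Suc n \<in> D \<and> \<omega> !! Suc (Suc n) \<in> D'} =
        {\<omega>. stl \<omega> \<in> {\<omega>. \<omega> !! n \<in> D \<and> \<omega> !! Suc n \<in> D'}}"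
      by simp
    then show ?case
      using emeasure_P_stl[of "{\<omega>. \<omega> !! n \<in> D \<and> \<omega> !! Suc n \<in> D'}" s] Suc
      by (simp add: sets_paths_Collect)
  qed
  show ?thesis
    unfolding AE_all_countable
  proof
    fix n
    show "AE \<omega> in P s. \<not> (\<omega> !! n \<in> D \<and> \<omega> !! Suc n \<in> D')"
      using step[of n] by (intro AE_I'[of "{\<omega>. \<omega> !! n \<in> D \<and> \<omega> !! Suc n \<in> D'}"])
        (auto simp: null_sets_def sets_paths_Collect)
  qed
qed


lemma sets_unanswered_visits[measurable]:
  assumes [measurable]: "D \<in> sets borel" "D' \<in> sets borel"
  shows "unanswered_visits D D' k N \<in> sets paths"
proof (induction N arbitrary: k)
  case (Suc N)
  note Suc[measurable]
  show ?case by (simp only: unanswered_visits.simps) (intro sets_paths_Collect, measurable)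
qed (simp add: sets.top[of paths, simplified])

lemma emeasure_P_shd_notin:
  assumes [measurable]: "D' \<in> sets borel" "X \<in> sets paths"
  shows "emeasure (P t) {\<omega>. shd \<omega> \<notin> D' \<and> \<omega> \<in> X} \<le> indicator (- D') t * emeasure (P t) X"
proof (cases "t \<in> D'")
  case True
  have "{\<omega>. shd \<omega> \<in> - D'} \<in> sets (P t)" by (simp add: sets_paths_Collect)
  then have "emeasure (P t) {\<omega>. shd \<omega> \<notin> D' \<and> \<omega> \<in> X} \<le> emeasure (P t) {\<omega>. shd \<omega> \<in> - D'}"
    by (rule emeasure_mono[rotated]) auto
  also have "\<dots> = 0" using True emeasure_P_shd[of "- D'" t] by (simp add: borel_comp)
  finally show ?thesis by simp
next
  case False
  then show ?thesis by (auto intro!: emeasure_mono)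
qed

lemma nn_integral_P_shd_notin_le:
  assumes [measurable]: "D' \<in> sets borel" "X \<in> sets paths"
    and bound: "\<And>t'. emeasure (P t') X \<le> ennreal b"
  shows "(\<integral>\<^sup>+t'. emeasure (P t') {\<omega>. shd \<omega> \<notin> D' \<and> \<omega> \<in> X} \<partial>K t) \<le>
    ennreal b * ennreal (1 - measure (K t) D')"
proof -
  interpret Kt: prob_space "K t" by (rule prob_space_K)
  have "(\<integral>\<^sup>+t'. emeasure (P t') {\<omega>. shd \<omega> \<notin> D' \<and> \<omega> \<in> X} \<partial>K t) \<le>
      (\<integral>\<^sup>+t'. ennreal b * indicator (- D') t' \<partial>K t)"
  proof (intro nn_integral_mono)
    fix t'
    have "emeasure (P t') {\<omega>. shd \<omega> \<notin> D' \<and> \<omega> \<in> X} \<le> indicator (- D') t' * emeasure (P t') X"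
      by (rule emeasure_P_shd_notin) simp_all
    also have "\<dots> \<le> indicator (- D') t' * ennreal b"
      by (intro mult_left_mono bound) simp
    finally show "emeasure (P t') {\<omega>. shd \<omega> \<notin> D' \<and> \<omega> \<in> X} \<le> ennreal b * indicator (- D') t'"
      by (simp add: mult.commute)
  qed
  also have "\<dots> = ennreal b * emeasure (K t) (- D')"
    by (rule nn_integral_cmult_indicator) simp
  also have "emeasure (K t) (- D') = ennreal (1 - measure (K t) D')"
    using Kt.prob_compl[of D'] by (simp add: Kt.emeasure_eq_measure Compl_eq_Diff_UNIV)
  finally show ?thesis .
qed


lemma emeasure_unanswered_visits_le:
  assumes [measurable]: "D \<in> sets borel" "D' \<in> sets borel"
    and \<epsilon>: "\<epsilon> \<le> 1" and lower: "\<And>s. s \<in> D \<Longrightarrow> \<epsilon> \<le> measure (K s) D'"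
  shows "emeasure (P t) (unanswered_visits D D' k N) \<le> ennreal ((1 - \<epsilon>) ^ k)"
proof (induction N arbitrary: k t)
  case 0
  then show ?case using prob_space.emeasure_space_1[OF prob_space_P, of t] by simp
next
  case (Suc N)
  have unfold: "emeasure (P t) (unanswered_visits D D' k (Suc N)) =
    (\<integral>\<^sup>+t'. emeasure (P t') {\<omega>. t ## \<omega> \<in> unanswered_visits D D' k (Suc N)} \<partial>K t)"
    by (rule emeasure_P_unfold) (rule sets_unanswered_visits[OF assms(1,2)])
  consider "t \<notin> D" | "t \<in> D" "k = 0" | k' where "t \<in> D" "k = Suc k'"
    using not0_implies_Suc by blast
  then show ?case
  proof cases
    case 1
    then have "emeasure (P t) (unanswered_visits D D' k (Suc N)) =
        (\<integral>\<^sup>+t'. emeasure (P t') (unanswered_visits D D' k N) \<partial>K t)"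
      by (simp only: unfold) (simp add: 1)
    also have "\<dots> \<le> (\<integral>\<^sup>+t'. ennreal ((1 - \<epsilon>) ^ k) \<partial>K t)"
      by (intro nn_integral_mono Suc.IH)
    finally show ?thesis using prob_space.emeasure_space_1[OF prob_space_K] by simp
  next
    case 2
    then show ?thesis using prob_space.emeasure_le_1[OF prob_space_P] by simp
  next
    case 3
    have "emeasure (P t) (unanswered_visits D D' k (Suc N)) =
        (\<integral>\<^sup>+t'. emeasure (P t') {\<omega>. shd \<omega> \<notin> D' \<and> \<omega> \<in> unanswered_visits D D' k' N} \<partial>K t)"
      by (simp only: unfold) (simp add: 3)
    also have "\<dots> \<le> ennreal ((1 - \<epsilon>) ^ k') * ennreal (1 - measure (K t) D')"
      by (rule nn_integral_P_shd_notin_le) (simp_all add: Suc.IH)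
    also have "\<dots> \<le> ennreal ((1 - \<epsilon>) ^ k') * ennreal (1 - \<epsilon>)"
      using lower[OF \<open>t \<in> D\<close>] by (intro mult_left_mono ennreal_leI) auto
    also have "\<dots> = ennreal ((1 - \<epsilon>) ^ k)"
      using \<epsilon> 3 by (simp add: ennreal_mult'[symmetric] mult.commute)
    finally show ?thesis .
  qed
qed

lemma emeasure_P_io_unanswered:
  assumes [measurable]: "D \<in> sets borel" "D' \<in> sets borel"
    and \<epsilon>: "0 < \<epsilon>" "\<epsilon> \<le> 1" and lower: "\<And>s. s \<in> D \<Longrightarrow> \<epsilon> \<le> measure (K s) D'"
  shows "emeasure (P t) {\<omega>. (\<exists>\<^sub>\<infinity>n. \<omega> !! n \<in> D) \<and> (\<forall>n. \<not> (\<omega> !! n \<in> D \<and> \<omega> !! Suc n \<in> D'))} = 0"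
    (is "emeasure _ ?E = 0")
proof -
  have E[measurable]: "?E \<in> sets paths"
    unfolding INFM_nat by (rule sets_paths_Collect) measurable
  interpret Pt: prob_space "P t" by (rule prob_space_P)
  have "Pt.prob ?E \<le> (1 - \<epsilon>) ^ k" for k
  proof -
    have "?E \<subseteq> (\<Union>N. unanswered_visits D D' k N)"
    proof
      fix \<omega> assume "\<omega> \<in> ?E"
      then have io: "\<exists>\<^sub>\<infinity>n. \<omega> !! n \<in> D" and never: "\<forall>n. \<not> (\<omega> !! n \<in> D \<and> \<omega> !! Suc n \<in> D')"
        by simp_all
      obtain N where "k \<le> visits D N \<omega>" using visits_unbounded[OF io] ..
      then show "\<omega> \<in> (\<Union>N. unanswered_visits D D' k N)" using in_unanswered_visits[OF never] by blast
    qed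
    then have "emeasure (P t) ?E \<le> emeasure (P t) (\<Union>N. unanswered_visits D D' k N)"
      by (intro emeasure_mono) auto
    also have "\<dots> = (SUP N. emeasure (P t) (unanswered_visits D D' k N))"
    proof (rule SUP_emeasure_incseq[symmetric])
      show "range (unanswered_visits D D' k) \<subseteq> sets (P t)"
        using sets_unanswered_visits[OF assms(1,2)] by auto
      show "incseq (unanswered_visits D D' k)"
        unfolding incseq_Suc_iff using unanswered_visits_Suc_mono by blast
    qed
    also have "\<dots> \<le> ennreal ((1 - \<epsilon>) ^ k)"
      by (intro SUP_least emeasure_unanswered_visits_le[OF assms(1,2) \<epsilon>(2) lower])
    finally show ?thesis using \<epsilon> by (simp add: Pt.emeasure_eq_measure)
  qed
  moreover have "(\<lambda>k. (1 - \<epsilon>) ^ k) \<longlonglongrightarrow> 0"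
    using \<epsilon> by (intro LIMSEQ_power_zero) auto
  ultimately have "Pt.prob ?E \<le> 0"
    by (intro LIMSEQ_le_const) auto
  then show ?thesis by (simp add: Pt.emeasure_eq_measure measure_le_0_iff)
qed

lemma AE_P_infinitely_often_step:
  assumes [measurable]: "D \<in> sets borel" "D' \<in> sets borel"
    and \<epsilon>: "0 < \<epsilon>" "\<epsilon> \<le> 1" and lower: "\<And>s. s \<in> D \<Longrightarrow> \<epsilon> \<le> measure (K s) D'"
  shows "AE \<omega> in P s. (\<exists>\<^sub>\<infinity>n. \<omega> !! n \<in> D) \<longrightarrow> (\<exists>\<^sub>\<infinity>n. \<omega> !! n \<in> D \<and> \<omega> !! Suc n \<in> D')"
proof -
  let ?E = "{\<omega>. (\<exists>\<^sub>\<infinity>n. \<omega> !! n \<in> D) \<and> (\<forall>n. \<not> (\<omega> !! n \<in> D \<and> \<omega> !! Suc n \<in> D'))}"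
  have E[measurable]: "?E \<in> sets paths"
    unfolding INFM_nat by (rule sets_paths_Collect) measurable
  have "AE \<omega> in P s. sdrop m \<omega> \<notin> ?E" for m
  proof (rule AE_I')
    have "{\<omega>. sdrop m \<omega> \<in> ?E} \<in> sets paths" by (rule sets_paths_Collect) measurable
    then show "{\<omega>. sdrop m \<omega> \<in> ?E} \<in> null_sets (P s)"
      using emeasure_P_sdrop_null[OF E emeasure_P_io_unanswered[OF assms], of s m]
      by (simp add: null_sets_def)
  qed auto
  then have "AE \<omega> in P s. \<forall>m. sdrop m \<omega> \<notin> ?E"
    by (simp add: AE_all_countable)
  then show ?thesis
  proof (rule eventually_mono, intro impI)
    fix \<omega> assume none: "\<forall>m. sdrop m \<omega> \<notin> ?E" and io: "\<exists>\<^sub>\<infinity>n. \<omega> !! n \<in> D"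
    show "\<exists>\<^sub>\<infinity>n. \<omega> !! n \<in> D \<and> \<omega> !! Suc n \<in> D'"
    proof (rule ccontr)
      assume "\<not> (\<exists>\<^sub>\<infinity>n. \<omega> !! n \<in> D \<and> \<omega> !! Suc n \<in> D')"
      then obtain m where m: "\<forall>n\<ge>m. \<not> (\<omega> !! n \<in> D \<and> \<omega> !! Suc n \<in> D')"
        by (auto simp: MOST_nat_le)
      have "\<exists>\<^sub>\<infinity>n. sdrop m \<omega> !! n \<in> D"
        unfolding INFM_nat
      proof
        fix m'
        obtain n where "n > m' + m" "\<omega> !! n \<in> D" using io unfolding INFM_nat by blast
        then show "\<exists>n>m'. sdrop m \<omega> !! n \<in> D" by (intro exI[of _ "n - m"]) (auto simp: sdrop_snth)
      qed
      moreover have "\<forall>n. \<not> (sdrop m \<omega> !! n \<in> D \<and> sdrop m \<omega> !! Suc n \<in> D')"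
        using m by (auto simp: sdrop_snth)
      ultimately show False using none by blast
    qed
  qed
qed

end

lemma measurable_INFM_snth:
  assumes [measurable]: "A \<in> sets M"
  shows "Measurable.pred (stream_space M) (\<lambda>\<omega>. \<exists>\<^sub>\<infinity>n. \<omega> !! n \<in> A)"
  unfolding INFM_nat by measurable

lemma measurable_parity:
  assumes "\<And>i. i \<in> {1..l} \<Longrightarrow> C i \<in> sets M"
  shows "Measurable.pred (stream_space M) (parity l C)"
proof -
  have "parity l C = (\<lambda>\<omega>. \<forall>i\<in>{1..l}. (\<lambda>\<omega>. odd i \<longrightarrow> (\<exists>\<^sub>\<infinity>n. \<omega> !! n \<in> C i) \<longrightarrow>
        (\<exists>j\<in>{1..l}. (\<lambda>\<omega>. even j \<and> i < j \<and> (\<exists>\<^sub>\<infinity>n. \<omega> !! n \<in> C j)) \<omega>)) \<omega>)"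
    \<comment> \<open>eta-expanded so that the bounded-quantifier rules of \<open>pred_intros\<close> match\<close>
    by (simp add: parity_def fun_eq_iff)
  also have "Measurable.pred (stream_space M) \<dots>"
  proof (intro pred_intros_countable_bounded(3) pred_intros_logic(4))
    fix i assume i: "i \<in> {1..l}"
    show "Measurable.pred (stream_space M) (\<lambda>\<omega>. odd i)" by simp
    show "Measurable.pred (stream_space M) (\<lambda>\<omega>. \<exists>\<^sub>\<infinity>n. \<omega> !! n \<in> C i)"
      using assms[OF i] by (rule measurable_INFM_snth)
    show "Measurable.pred (stream_space M) (\<lambda>\<omega>. \<exists>j\<in>{1..l}. even j \<and> i < j \<and> (\<exists>\<^sub>\<infinity>n. \<omega> !! n \<in> C j))"
    proof (intro pred_intros_countable_bounded(4))
      fix j assume "j \<in> {1..l}"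
      then have [measurable]: "Measurable.pred (stream_space M) (\<lambda>\<omega>. \<exists>\<^sub>\<infinity>n. \<omega> !! n \<in> C j)"
        using assms by (intro measurable_INFM_snth)
      show "Measurable.pred (stream_space M) (\<lambda>\<omega>. even j \<and> i < j \<and> (\<exists>\<^sub>\<infinity>n. \<omega> !! n \<in> C j))"
        by measurable
    qed
  qed
  finally show ?thesis .
qed

lemma sets_parity:
  assumes "\<And>i. i \<in> {1..l} \<Longrightarrow> C i \<in> sets M" "space M = UNIV"
  shows "{\<omega>. parity l C \<omega>} \<in> sets (stream_space M)"
  using measurable_parity[OF assms(1)] assms(2) by (simp add: pred_def space_stream_space)

lemma INFM_Suc_iff: "(\<exists>\<^sub>\<infinity>n. P (Suc n)) \<longleftrightarrow> (\<exists>\<^sub>\<infinity>n::nat. P n)"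
  by (simp only: frequently_def MOST_Suc_iff[of "\<lambda>n. \<not> P n"])

lemma rtrancl_of_chain:
  assumes "n \<le> n'" "\<And>i. n \<le> i \<Longrightarrow> i < n' \<Longrightarrow> (f i, f (Suc i)) \<in> E"
  shows "(f n, f n') \<in> E\<^sup>*"
  using assms by (induction n' rule: dec_induct) (auto intro: rtrancl_into_rtrancl)

section \<open>Losing paths of the refined process yield odd traps\<close>

locale parity_abstraction =
  fixes T :: "'s::polish_space \<Rightarrow> 'u::finite \<Rightarrow> 's measure"
    and l :: nat and B :: "nat \<Rightarrow> 's set"
    and Sh :: "'s set set"
    and Fo Fu :: "'s set \<Rightarrow> 'u \<Rightarrow> 's set set"
    and \<sigma> :: "'s set \<Rightarrow> 'u"
    and c :: "'s set"
  assumes CMP: "is_CMP T"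
    and priority_partition: "is_priority_partition l B"
    and abstraction: "is_abstraction l B Sh"
    and valid_F: "valid_F T Sh Fo Fu"
    and c_in_Sh: "c \<in> Sh"
begin

lemma finite_Sh: "finite Sh"
  and Sh_nonempty: "d \<in> Sh \<Longrightarrow> d \<noteq> {}"
  and sets_Sh: "d \<in> Sh \<Longrightarrow> d \<in> sets borel"
  and Sh_disjoint: "d \<in> Sh \<Longrightarrow> d' \<in> Sh \<Longrightarrow> d \<noteq> d' \<Longrightarrow> d \<inter> d' = {}"
  and Sh_covers: "\<exists>d\<in>Sh. s \<in> d"
  and Sh_in_B: "d \<in> Sh \<Longrightarrow> \<exists>i\<in>{1..l}. d \<subseteq> B i"
  using abstraction by (auto simp: is_abstraction_def)

lemma B_disjoint: "i \<in> {1..l} \<Longrightarrow> j \<in> {1..l} \<Longrightarrow> x \<in> B i \<Longrightarrow> x \<in> B j \<Longrightarrow> i = j"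
  and sets_B: "i \<in> {1..l} \<Longrightarrow> B i \<in> sets borel"
  using priority_partition unfolding is_priority_partition_def by blast+

lemma cell_of_eq: "d \<in> Sh \<Longrightarrow> s \<in> d \<Longrightarrow> cell_of Sh s = d"
  unfolding cell_of_def using Sh_disjoint by (intro the_equality) blast+

lemma cell_of_in_Sh: "cell_of Sh s \<in> Sh" and in_cell_of: "s \<in> cell_of Sh s"
  using Sh_covers[of s] cell_of_eq by auto

definition priority :: "'s set \<Rightarrow> nat" where
  "priority d = (THE i. i \<in> {1..l} \<and> d \<subseteq> B i)"

lemma priority_unique: "d \<in> Sh \<Longrightarrow> i \<in> {1..l} \<Longrightarrow> d \<subseteq> B i \<Longrightarrow> priority d = i"
proof -
  assume d: "d \<in> Sh" and i: "i \<in> {1..l}" "d \<subseteq> B i"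
  obtain x where "x \<in> d" using Sh_nonempty[OF d] by auto
  show "priority d = i"
    unfolding priority_def
  proof (rule the_equality)
    fix j assume "j \<in> {1..l} \<and> d \<subseteq> B j"
    then show "j = i" using i \<open>x \<in> d\<close> B_disjoint by blast
  qed (use i in auto)
qed

lemma priority_in_range: "d \<in> Sh \<Longrightarrow> priority d \<in> {1..l}"
  and subset_B_priority: "d \<in> Sh \<Longrightarrow> d \<subseteq> B (priority d)"
  using Sh_in_B priority_unique by blast+

lemma prob_space_T: "prob_space (T s u)" and sets_T: "sets (T s u) = sets borel"
  using CMP by (auto simp: is_CMP_def)

lemma Fo_subset_Sh: "d \<in> Sh \<Longrightarrow> Fo d u \<subseteq> Sh"
  and Fu_subset_Sh: "d \<in> Sh \<Longrightarrow> Fu d u \<subseteq> Sh"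
  and Fo_if_positive: "d \<in> Sh \<Longrightarrow> d' \<in> Sh \<Longrightarrow> s \<in> d \<Longrightarrow> measure (T s u) d' > 0 \<Longrightarrow> d' \<in> Fo d u"
  and Fu_lower_bound: "d \<in> Sh \<Longrightarrow> d' \<in> Fu d u \<Longrightarrow> \<exists>\<epsilon>>0. \<forall>s\<in>d. measure (T s u) d' \<ge> \<epsilon>"
  using valid_F unfolding valid_F_def by blast+

lemma Fu_subset_Fo: "d \<in> Sh \<Longrightarrow> Fu d u \<subseteq> Fo d u"
proof
  fix d' assume d: "d \<in> Sh" and d': "d' \<in> Fu d u"
  obtain \<epsilon> where \<epsilon>: "\<epsilon> > 0" "\<forall>s\<in>d. measure (T s u) d' \<ge> \<epsilon>" using Fu_lower_bound[OF d d'] by blast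
  obtain s where s: "s \<in> d" using Sh_nonempty[OF d] by auto
  have "d' \<in> Sh" using Fu_subset_Sh[OF d] d' by blast
  then show "d' \<in> Fo d u" using \<epsilon> s by (intro Fo_if_positive[OF d _ s]) force+
qed

lemma Fo_nonempty: "d \<in> Sh \<Longrightarrow> Fo d u \<noteq> {}"
proof
  assume d: "d \<in> Sh" and empty: "Fo d u = {}"
  obtain s where s: "s \<in> d" using Sh_nonempty[OF d] by auto
  interpret prob_space "T s u" by (rule prob_space_T)
  have null: "measure (T s u) d' = 0" if "d' \<in> Sh" for d'
  proof -
    have "\<not> 0 < measure (T s u) d'" using Fo_if_positive[OF d that s, of u] empty by blast
    then show ?thesis using measure_nonneg[of "T s u" d'] by linarith
  qed
  have "\<Union>Sh = space (T s u)"
    using Sh_covers sets_eq_imp_space_eq[OF sets_T[of s u]] by auto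
  then have "1 = measure (T s u) (\<Union>Sh)" by (simp add: prob_space)
  also have "\<dots> \<le> (\<Sum>d'\<in>Sh. measure (T s u) d')"
    using finite_Sh sets_Sh by (intro measure_Union_le) (auto simp: sets_T)
  also have "\<dots> = 0" using null by simp
  finally show False by simp
qed

definition stay_edges :: "'s set set \<Rightarrow> ('s set \<times> 's set) set" where
  "stay_edges C = {(d, d'). d \<in> Sh \<and> d' \<in> Fo d (\<sigma> d) \<and> (d \<in> C \<longrightarrow> d' \<in> C)}"

text \<open>An end component in which Player 1 can keep the play and force visits to the cell \<open>m\<close>
  of odd maximal priority.\<close>

definition odd_trap :: "'s set set \<Rightarrow> 's set \<Rightarrow> bool" where
  "odd_trap C m \<longleftrightarrow> C \<subseteq> Sh \<and> m \<in> C \<and> (\<forall>d\<in>C. Fu d (\<sigma> d) \<subseteq> C) \<and>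
     (\<forall>d\<in>C. \<exists>d'\<in>C. d' \<in> Fo d (\<sigma> d)) \<and> odd (priority m) \<and> (\<forall>d\<in>C. priority d \<le> priority m) \<and>
     (\<forall>d\<in>C. (d, m) \<in> (stay_edges C)\<^sup>*) \<and> (c, m) \<in> (stay_edges C)\<^sup>*"

definition recurrent_cells :: "'s stream \<Rightarrow> 's set set" where
  "recurrent_cells \<omega> = {d \<in> Sh. \<exists>\<^sub>\<infinity>n. \<omega> !! n \<in> d}"

definition follows_Fo :: "'s stream \<Rightarrow> bool" where
  "follows_Fo \<omega> \<longleftrightarrow> (\<forall>n. cell_of Sh (\<omega> !! Suc n) \<in> Fo (cell_of Sh (\<omega> !! n)) (\<sigma> (cell_of Sh (\<omega> !! n))))"

definition Fu_fair :: "'s stream \<Rightarrow> bool" where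
  "Fu_fair \<omega> \<longleftrightarrow>
     (\<forall>d\<in>Sh. \<forall>d'\<in>Fu d (\<sigma> d). (\<exists>\<^sub>\<infinity>n. \<omega> !! n \<in> d) \<longrightarrow> (\<exists>\<^sub>\<infinity>n. \<omega> !! n \<in> d \<and> \<omega> !! Suc n \<in> d'))"

lemma recurrent_cells_eventually:
  "\<exists>N. \<forall>n\<ge>N. cell_of Sh (\<omega> !! n) \<in> recurrent_cells \<omega>"
proof -
  have "\<forall>\<^sub>\<infinity>n. \<forall>d\<in>Sh - recurrent_cells \<omega>. \<omega> !! n \<notin> d"
    using finite_Sh by (intro eventually_ball_finite) (auto simp: recurrent_cells_def)
  then obtain N where "\<forall>n\<ge>N. \<forall>d\<in>Sh - recurrent_cells \<omega>. \<omega> !! n \<notin> d"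
    by (auto simp: MOST_nat_le)
  then show ?thesis using cell_of_in_Sh in_cell_of by blast
qed

lemma max_recurrent_priority_odd:
  assumes "\<not> parity l B \<omega>" "m \<in> recurrent_cells \<omega>"
    and max: "\<forall>d\<in>recurrent_cells \<omega>. priority d \<le> priority m"
  shows "odd (priority m)"
proof (rule ccontr)
  assume even: "\<not> odd (priority m)"
  obtain N where N: "\<forall>n\<ge>N. cell_of Sh (\<omega> !! n) \<in> recurrent_cells \<omega>"
    using recurrent_cells_eventually by blast
  have m: "m \<in> Sh" "\<exists>\<^sub>\<infinity>n. \<omega> !! n \<in> m" using assms(2) by (auto simp: recurrent_cells_def)
  have "parity l B \<omega>"
    unfolding parity_def
  proof (intro ballI impI)
    fix i assume i: "i \<in> {1..l}" "odd i" and io: "\<exists>\<^sub>\<infinity>n. \<omega> !! n \<in> B i"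
    obtain n where n: "n \<ge> N" "\<omega> !! n \<in> B i" using io by (auto simp: INFM_nat_le)
    have "priority (cell_of Sh (\<omega> !! n)) = i"
      using priority_in_range subset_B_priority cell_of_in_Sh in_cell_of n(2) i(1) B_disjoint by blast
    then have "i < priority m" using max N n(1) even i(2) by (metis le_neq_implies_less)
    moreover have "\<exists>\<^sub>\<infinity>n. \<omega> !! n \<in> B (priority m)"
      using m(2) subset_B_priority[OF m(1)] by (elim INFM_mono) auto
    ultimately show "\<exists>j\<in>{1..l}. even j \<and> i < j \<and> (\<exists>\<^sub>\<infinity>n. \<omega> !! n \<in> B j)"
      using even priority_in_range[OF m(1)] by blast
  qed
  with assms(1) show False by simp
qed

lemma recurrent_cells_Fu_closed:
  assumes fair: "Fu_fair \<omega>"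
    and d: "d \<in> recurrent_cells \<omega>"
  shows "Fu d (\<sigma> d) \<subseteq> recurrent_cells \<omega>"
proof
  fix d' assume d': "d' \<in> Fu d (\<sigma> d)"
  have "d \<in> Sh" and io: "\<exists>\<^sub>\<infinity>n. \<omega> !! n \<in> d" using d by (auto simp: recurrent_cells_def)
  have "\<exists>\<^sub>\<infinity>n. \<omega> !! n \<in> d \<and> \<omega> !! Suc n \<in> d'"
    using fair \<open>d \<in> Sh\<close> d' io unfolding Fu_fair_def by blast
  then have "\<exists>\<^sub>\<infinity>n. \<omega> !! Suc n \<in> d'" by (rule INFM_mono) simp
  then have "\<exists>\<^sub>\<infinity>n. \<omega> !! n \<in> d'" by (simp only: INFM_Suc_iff[of "\<lambda>n. \<omega> !! n \<in> d'"])
  then show "d' \<in> recurrent_cells \<omega>"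
    using Fu_subset_Sh[OF \<open>d \<in> Sh\<close>] d' by (auto simp: recurrent_cells_def)
qed

context
  fixes \<omega> :: "'s stream"
  assumes follows: "follows_Fo \<omega>"
begin

lemma path_stay_edge:
  "(cell_of Sh (\<omega> !! n) \<in> C \<longrightarrow> cell_of Sh (\<omega> !! Suc n) \<in> C) \<Longrightarrow>
    (cell_of Sh (\<omega> !! n), cell_of Sh (\<omega> !! Suc n)) \<in> stay_edges C"
  using follows cell_of_in_Sh by (simp add: stay_edges_def follows_Fo_def)

lemma recurrent_cells_Fo_successor:
  assumes "d \<in> recurrent_cells \<omega>"
  shows "\<exists>d'\<in>recurrent_cells \<omega>. d' \<in> Fo d (\<sigma> d)"
proof -
  obtain N where N: "\<forall>n\<ge>N. cell_of Sh (\<omega> !! n) \<in> recurrent_cells \<omega>"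
    using recurrent_cells_eventually by blast
  obtain n where n: "n \<ge> N" "\<omega> !! n \<in> d" using assms by (auto simp: recurrent_cells_def INFM_nat_le)
  then have "cell_of Sh (\<omega> !! n) = d" using assms by (intro cell_of_eq) (auto simp: recurrent_cells_def)
  then have "cell_of Sh (\<omega> !! Suc n) \<in> Fo d (\<sigma> d)" using follows by (auto simp: follows_Fo_def)
  moreover have "cell_of Sh (\<omega> !! Suc n) \<in> recurrent_cells \<omega>" using N[rule_format, of "Suc n"] n(1) by simp
  ultimately show ?thesis by blast
qed

lemma recurrent_cells_reach:
  assumes "d \<in> recurrent_cells \<omega>" "m \<in> recurrent_cells \<omega>"
  shows "(d, m) \<in> (stay_edges (recurrent_cells \<omega>))\<^sup>*"
proof -
  obtain N where N: "\<forall>n\<ge>N. cell_of Sh (\<omega> !! n) \<in> recurrent_cells \<omega>"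
    using recurrent_cells_eventually by blast
  obtain n where n: "n \<ge> N" "\<omega> !! n \<in> d" using assms(1) by (auto simp: recurrent_cells_def INFM_nat_le)
  obtain n' where n': "n' \<ge> n" "\<omega> !! n' \<in> m" using assms(2) by (auto simp: recurrent_cells_def INFM_nat_le)
  have "(cell_of Sh (\<omega> !! n), cell_of Sh (\<omega> !! n')) \<in> (stay_edges (recurrent_cells \<omega>))\<^sup>*"
    using n'(1)
  proof (rule rtrancl_of_chain)
    fix i assume "n \<le> i"
    then show "(cell_of Sh (\<omega> !! i), cell_of Sh (\<omega> !! Suc i)) \<in> stay_edges (recurrent_cells \<omega>)"
      using N[rule_format, of "Suc i"] n(1) by (intro path_stay_edge impI) simp
  qed
  moreover have "d \<in> Sh" "m \<in> Sh" using assms by (auto simp: recurrent_cells_def)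
  ultimately show ?thesis using n(2) n'(2) cell_of_eq by metis
qed

lemma reach_recurrent_cells:
  assumes "\<omega> !! 0 \<in> c" "m \<in> recurrent_cells \<omega>"
  shows "(c, m) \<in> (stay_edges (recurrent_cells \<omega>))\<^sup>*"
proof -
  let ?R = "recurrent_cells \<omega>"
  obtain N where "cell_of Sh (\<omega> !! N) \<in> ?R" using recurrent_cells_eventually by blast
  define k where "k = (LEAST k. cell_of Sh (\<omega> !! k) \<in> ?R)"
  have k: "cell_of Sh (\<omega> !! k) \<in> ?R"
    unfolding k_def by (rule LeastI) fact
  have before: "cell_of Sh (\<omega> !! j) \<notin> ?R" if "j < k" for j
    using that unfolding k_def by (rule not_less_Least)
  have "(cell_of Sh (\<omega> !! 0), cell_of Sh (\<omega> !! k)) \<in> (stay_edges ?R)\<^sup>*"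
  proof (rule rtrancl_of_chain)
    fix i assume "i < k"
    then show "(cell_of Sh (\<omega> !! i), cell_of Sh (\<omega> !! Suc i)) \<in> stay_edges ?R"
      using before by (intro path_stay_edge) blast
  qed simp
  moreover have "cell_of Sh (\<omega> !! 0) = c" using assms(1) c_in_Sh by (intro cell_of_eq)
  ultimately show ?thesis using recurrent_cells_reach[OF k assms(2)] by simp
qed

lemma odd_trap_of_losing_path:
  assumes fair: "Fu_fair \<omega>"
    and start: "\<omega> !! 0 \<in> c" and losing: "\<not> parity l B \<omega>"
  shows "\<exists>C m. odd_trap C m"
proof -
  let ?R = "recurrent_cells \<omega>"
  have "finite ?R" using finite_Sh by (simp add: recurrent_cells_def)
  moreover have "?R \<noteq> {}" using recurrent_cells_eventually by blast
  ultimately have "Max (priority ` ?R) \<in> priority ` ?R" by (intro Max_in) auto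
  then obtain m where m: "m \<in> ?R" "priority m = Max (priority ` ?R)" by (auto simp del: Max_in)
  then have max: "\<forall>d\<in>?R. priority d \<le> priority m"
    using \<open>finite ?R\<close> by simp
  have "odd_trap ?R m"
    unfolding odd_trap_def
    using m(1) max max_recurrent_priority_odd[OF losing m(1) max] recurrent_cells_Fu_closed[OF fair]
      recurrent_cells_Fo_successor recurrent_cells_reach reach_recurrent_cells[OF start m(1)]
    by (auto simp: recurrent_cells_def)
  then show ?thesis by blast
qed

end

end

section \<open>Player 1's answer to an odd trap\<close>

context parity_abstraction
begin

context
  fixes C m
  assumes trap: "odd_trap C m"
begin

lemma C_subset_Sh: "C \<subseteq> Sh" and m_in_C: "m \<in> C"
  and Fu_closed: "d \<in> C \<Longrightarrow> Fu d (\<sigma> d) \<subseteq> C"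
  and Fo_successor: "d \<in> C \<Longrightarrow> \<exists>d'\<in>C. d' \<in> Fo d (\<sigma> d)"
  and odd_priority_m: "odd (priority m)"
  and priority_le_m: "d \<in> C \<Longrightarrow> priority d \<le> priority m"
  and C_reaches_m: "d \<in> C \<Longrightarrow> (d, m) \<in> (stay_edges C)\<^sup>*"
  and c_reaches_m: "(c, m) \<in> (stay_edges C)\<^sup>*"
  using trap unfolding odd_trap_def by auto

lemma m_in_Sh: "m \<in> Sh" using C_subset_Sh m_in_C by auto

definition dist_to_m :: "'s set \<Rightarrow> nat" where
  "dist_to_m d = (LEAST k. (d, m) \<in> stay_edges C ^^ k)"

lemma dist_to_m: "(d, m) \<in> (stay_edges C)\<^sup>* \<Longrightarrow> (d, m) \<in> stay_edges C ^^ dist_to_m d"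
  unfolding dist_to_m_def by (metis LeastI rtrancl_power)

lemma dist_to_m_0: "(d, m) \<in> (stay_edges C)\<^sup>* \<Longrightarrow> dist_to_m d = 0 \<Longrightarrow> d = m"
  using dist_to_m by fastforce

lemma in_Sh_if_reaches_m: "(d, m) \<in> (stay_edges C)\<^sup>* \<Longrightarrow> d \<in> Sh"
  by (erule converse_rtranclE) (auto simp: m_in_Sh stay_edges_def)

lemma finite_dist_to_m: "finite (dist_to_m ` {d. (d, m) \<in> (stay_edges C)\<^sup>*})"
  using finite_Sh in_Sh_if_reaches_m by (blast intro: finite_subset)

definition next_cell :: "'s set \<Rightarrow> 's set" where
  "next_cell d = (if d = m then (SOME d'. d' \<in> C \<and> d' \<in> Fo m (\<sigma> m))
     else (SOME d'. (d, d') \<in> stay_edges C \<and> (d', m) \<in> (stay_edges C)\<^sup>* \<and> dist_to_m d' < dist_to_m d))"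

lemma next_cell:
  assumes d: "(d, m) \<in> (stay_edges C)\<^sup>*"
  shows "(d, next_cell d) \<in> stay_edges C" "(next_cell d, m) \<in> (stay_edges C)\<^sup>*"
    "d \<noteq> m \<Longrightarrow> dist_to_m (next_cell d) < dist_to_m d"
proof -
  have "(d, next_cell d) \<in> stay_edges C \<and> (next_cell d, m) \<in> (stay_edges C)\<^sup>* \<and>
      (d \<noteq> m \<longrightarrow> dist_to_m (next_cell d) < dist_to_m d)"
  proof (cases "d = m")
    case True
    have "\<exists>d'. d' \<in> C \<and> d' \<in> Fo m (\<sigma> m)" using Fo_successor[OF m_in_C] by blast
    then have "next_cell m \<in> C \<and> next_cell m \<in> Fo m (\<sigma> m)"
      unfolding next_cell_def if_P[OF refl] by (rule someI_ex)
    then show ?thesis using True m_in_Sh m_in_C C_reaches_m by (auto simp: stay_edges_def)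
  next
    case False
    obtain k where k: "dist_to_m d = Suc k" using dist_to_m_0[OF d] False not0_implies_Suc by blast
    then obtain y where y: "(d, y) \<in> stay_edges C" "(y, m) \<in> stay_edges C ^^ k"
      using dist_to_m[OF d] by (metis relpow_Suc_D2)
    have "dist_to_m y \<le> k" unfolding dist_to_m_def using y(2) by (rule Least_le)
    then have "\<exists>d'. (d, d') \<in> stay_edges C \<and> (d', m) \<in> (stay_edges C)\<^sup>* \<and> dist_to_m d' < dist_to_m d"
      using y k relpow_imp_rtrancl by (intro exI[of _ y]) auto
    then have "(d, next_cell d) \<in> stay_edges C \<and> (next_cell d, m) \<in> (stay_edges C)\<^sup>* \<and>
        dist_to_m (next_cell d) < dist_to_m d"
      unfolding next_cell_def if_not_P[OF False] by (rule someI_ex)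
    then show ?thesis by blast
  qed
  then show "(d, next_cell d) \<in> stay_edges C" "(next_cell d, m) \<in> (stay_edges C)\<^sup>*"
    "d \<noteq> m \<Longrightarrow> dist_to_m (next_cell d) < dist_to_m d"
    by auto
qed

lemma next_cell_in_Fo: "(d, m) \<in> (stay_edges C)\<^sup>* \<Longrightarrow> next_cell d \<in> Fo d (\<sigma> d)"
  using next_cell(1) by (auto simp: stay_edges_def)

lemma next_cell_in_C: "d \<in> C \<Longrightarrow> next_cell d \<in> C"
  using next_cell(1) C_reaches_m by (auto simp: stay_edges_def)

text \<open>\<open>Vr_of\<close> leaves Player 1 room for exactly one cell beyond \<open>Fu d u\<close>.\<close>

definition p1_choice :: "'s set \<Rightarrow> 'u \<Rightarrow> 's set set" where
  "p1_choice d u = (if (d, m) \<in> (stay_edges C)\<^sup>* \<and> u = \<sigma> d then insert (next_cell d) (Fu d u)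
     else insert (SOME d'. d' \<in> Fo d u) (Fu d u))"

lemma p1_choice_bounds: "d \<in> Sh \<Longrightarrow> Fu d u \<subseteq> p1_choice d u \<and> p1_choice d u \<subseteq> Fo d u"
proof -
  assume d: "d \<in> Sh"
  have "(SOME d'. d' \<in> Fo d u) \<in> Fo d u" using Fo_nonempty[OF d] by (simp add: some_in_eq)
  then show ?thesis using Fu_subset_Fo[OF d] next_cell_in_Fo by (auto simp: p1_choice_def)
qed

lemma p1_choice_subset_Sh: "d \<in> Sh \<Longrightarrow> p1_choice d u \<subseteq> Sh"
  using p1_choice_bounds Fo_subset_Sh by blast

lemma finite_p1_choice: "d \<in> Sh \<Longrightarrow> finite (p1_choice d u)"
  using p1_choice_subset_Sh finite_Sh by (rule finite_subset)

lemma p1_choice_nonempty: "p1_choice d u \<noteq> {}"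
  by (simp add: p1_choice_def)

lemma p1_choice_in_Vr_of: "d \<in> Sh \<Longrightarrow> p1_choice d u \<in> Vr_of Fo Fu d u"
proof -
  assume d: "d \<in> Sh"
  have "finite (Fu d u)" using finite_subset[OF Fu_subset_Sh[OF d] finite_Sh] .
  moreover obtain x where "p1_choice d u = insert x (Fu d u)" unfolding p1_choice_def by metis
  ultimately have "card (p1_choice d u) \<le> card (Fu d u) + 1" by (simp add: card_insert_if)
  moreover have "1 \<le> card (p1_choice d u)"
    using finite_p1_choice[OF d] p1_choice_nonempty by (simp add: Suc_leI card_gt_0_iff)
  ultimately show ?thesis using p1_choice_bounds[OF d] by (simp add: Vr_of_def)
qed

lemma next_cell_in_p1_choice: "(d, m) \<in> (stay_edges C)\<^sup>* \<Longrightarrow> next_cell d \<in> p1_choice d (\<sigma> d)"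
  by (simp add: p1_choice_def)

lemma p1_choice_subset_C: "d \<in> C \<Longrightarrow> p1_choice d (\<sigma> d) \<subseteq> C"
  using C_reaches_m Fu_closed next_cell_in_C by (auto simp: p1_choice_def)

definition counter_strategy :: "('s, 'u) gvert list \<Rightarrow> ('s, 'u) gvert pmf" where
  "counter_strategy h =
     (case last h of GV1 d u \<Rightarrow> return_pmf (GVr (p1_choice d u)) | _ \<Rightarrow> return_pmf (GV0 {}))"

lemma p1_strategy_counter_strategy: "p1_strategy Sh Fo Fu counter_strategy"
  unfolding p1_strategy_def counter_strategy_def using p1_choice_in_Vr_of by auto

text \<open>Only consulted at histories ending in a random vertex, whose predecessor is the Player 1
  vertex that chose it.\<close>

definition preferred_vertex :: "('s, 'u) gvert list \<Rightarrow> ('s, 'u) gvert" where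
  "preferred_vertex h = (case last (butlast h) of GV1 d u \<Rightarrow> GV0 (next_cell d) | _ \<Rightarrow> GV0 {})"

abbreviation counter_step :: "('s, 'u) gvert list \<Rightarrow> ('s, 'u) gvert pmf" where
  "counter_step \<equiv> gstep \<sigma> counter_strategy"

definition counter_play :: "real stream \<Rightarrow> ('s, 'u) gvert stream" where
  "counter_play xs = GV0 c ## sampled_run counter_step preferred_vertex [GV0 c] xs"

lemma shd_counter_play: "shd (counter_play xs) = GV0 c"
  by (simp add: counter_play_def)

lemma counter_play_Suc:
  "counter_play xs !! Suc n = sample (counter_step (stake (Suc n) (counter_play xs)))
     (preferred_vertex (stake (Suc n) (counter_play xs))) (xs !! n)"
  unfolding counter_play_def by (simp add: snth_history_run)

lemma last_stake_Suc: "last (stake (Suc n) s) = s !! n"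
  and butlast_stake_Suc: "butlast (stake (Suc n) s) = stake n s"
  by (simp_all only: stake_Suc last_snoc butlast_snoc)

lemma counter_step_stake:
  "counter_step (stake (Suc n) (counter_play xs)) = (case counter_play xs !! n of
       GV0 d \<Rightarrow> return_pmf (GV1 d (\<sigma> d))
     | GV1 d u \<Rightarrow> return_pmf (GVr (p1_choice d u))
     | GVr R \<Rightarrow> pmf_of_set (GV0 ` R))"
  by (simp only: gstep_def counter_strategy_def last_stake_Suc) (simp split: gvert.split)

lemma counter_play_Suc_in: "counter_play xs !! Suc n \<in> set_pmf (counter_step (stake (Suc n) (counter_play xs)))"
  by (simp only: counter_play_Suc sample_in_set_pmf)

lemma counter_play_after_GV0: "counter_play xs !! n = GV0 d \<Longrightarrow> counter_play xs !! Suc n = GV1 d (\<sigma> d)"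
  using counter_play_Suc_in[of xs n] by (simp only: counter_step_stake) simp

lemma counter_play_after_GV1: "counter_play xs !! n = GV1 d u \<Longrightarrow> counter_play xs !! Suc n = GVr (p1_choice d u)"
  using counter_play_Suc_in[of xs n] by (simp only: counter_step_stake) simp

lemma counter_play_after_GVr:
  "counter_play xs !! n = GVr R \<Longrightarrow> finite R \<Longrightarrow> R \<noteq> {} \<Longrightarrow> counter_play xs !! Suc n \<in> GV0 ` R"
  using counter_play_Suc_in[of xs n] by (simp only: counter_step_stake) simp

lemma counter_play_lucky:
  assumes "counter_play xs !! n = GV1 d u" "counter_play xs !! Suc n = GVr R"
    and R: "finite R" "next_cell d \<in> R" and lucky: "xs !! Suc n < 1 / card R"
  shows "counter_play xs !! Suc (Suc n) = GV0 (next_cell d)"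
proof -
  let ?h = "stake (Suc (Suc n)) (counter_play xs)"
  have step: "counter_step ?h = pmf_of_set (GV0 ` R)"
    using assms(2) by (simp only: counter_step_stake) simp
  have "last (butlast ?h) = GV1 d u" by (simp only: butlast_stake_Suc last_stake_Suc assms(1))
  then have preferred: "preferred_vertex ?h = GV0 (next_cell d)" by (simp add: preferred_vertex_def)
  have "card (GV0 ` R) = card R" by (rule card_image) (simp add: inj_on_def)
  then have pmf: "pmf (pmf_of_set (GV0 ` R)) (GV0 (next_cell d)) = 1 / card R"
    using R by (subst pmf_of_set) auto
  have "GV0 (next_cell d) \<in> set_pmf (pmf_of_set (GV0 ` R))"
    using R by (subst set_pmf_of_set) auto
  then have "sample (pmf_of_set (GV0 ` R)) (GV0 (next_cell d)) (xs !! Suc n) = GV0 (next_cell d)"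
    by (rule sample_eq_preferred) (simp only: pmf lucky)
  then show ?thesis by (simp only: counter_play_Suc[of xs "Suc n"] step preferred)
qed

text \<open>The play passes through a Player 0 vertex every third step; the random choice ending round
  \<open>k\<close> reads the uniform variable \<open>xs !! Suc (Suc (3 * k))\<close>.\<close>

definition play_cell :: "real stream \<Rightarrow> nat \<Rightarrow> 's set" where
  "play_cell xs k = (case counter_play xs !! (3 * k) of GV0 d \<Rightarrow> d | _ \<Rightarrow> {})"

lemma three_Suc: "3 * Suc k = Suc (Suc (Suc (3 * k)))" by simp

lemma counter_play_GV0:
  "counter_play xs !! (3 * k) = GV0 (play_cell xs k) \<and> play_cell xs k \<in> Sh"
proof (induction k)
  case 0 then show ?case using c_in_Sh by (simp add: play_cell_def shd_counter_play)
next
  case (Suc k)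
  let ?d = "play_cell xs k"
  have "counter_play xs !! Suc (Suc (3 * k)) = GVr (p1_choice ?d (\<sigma> ?d))"
    by (rule counter_play_after_GV1[OF counter_play_after_GV0[OF Suc[THEN conjunct1]]])
  then have "counter_play xs !! (3 * Suc k) \<in> GV0 ` p1_choice ?d (\<sigma> ?d)"
    unfolding three_Suc
    by (rule counter_play_after_GVr[OF _ finite_p1_choice[OF Suc[THEN conjunct2]]
          p1_choice_nonempty])
  then obtain d' where "d' \<in> p1_choice ?d (\<sigma> ?d)" "counter_play xs !! (3 * Suc k) = GV0 d'"
    by (rule imageE) simp
  then show ?case
    using p1_choice_subset_Sh[OF Suc[THEN conjunct2]] by (auto simp: play_cell_def)
qed

lemma counter_play_GV1: "counter_play xs !! Suc (3 * k) = GV1 (play_cell xs k) (\<sigma> (play_cell xs k))"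
  by (rule counter_play_after_GV0[OF counter_play_GV0[THEN conjunct1]])

lemma counter_play_GVr:
  "counter_play xs !! Suc (Suc (3 * k)) = GVr (p1_choice (play_cell xs k) (\<sigma> (play_cell xs k)))"
  by (rule counter_play_after_GV1[OF counter_play_GV1])

lemma play_cell_Suc: "play_cell xs (Suc k) \<in> p1_choice (play_cell xs k) (\<sigma> (play_cell xs k))"
proof -
  have "counter_play xs !! (3 * Suc k) \<in> GV0 ` p1_choice (play_cell xs k) (\<sigma> (play_cell xs k))"
    unfolding three_Suc
    by (rule counter_play_after_GVr[OF counter_play_GVr
          finite_p1_choice[OF counter_play_GV0[THEN conjunct2]] p1_choice_nonempty])
  then show ?thesis using counter_play_GV0[of xs "Suc k", THEN conjunct1] by auto
qed

lemma play_cell_in_C: "play_cell xs k \<in> C \<Longrightarrow> play_cell xs (Suc k) \<in> C"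
  using play_cell_Suc p1_choice_subset_C by blast

lemma counter_play_eq_GV0: "counter_play xs !! n = GV0 d \<Longrightarrow> d = play_cell xs (n div 3)"
proof -
  assume v: "counter_play xs !! n = GV0 d"
  have "n = 3 * (n div 3) \<or> n = Suc (3 * (n div 3)) \<or> n = Suc (Suc (3 * (n div 3)))"
    by presburger
  then consider "n = 3 * (n div 3)" | "n = Suc (3 * (n div 3))" | "n = Suc (Suc (3 * (n div 3)))"
    by blast
  then show ?thesis
  proof cases
    case 1
    then have "counter_play xs !! n = GV0 (play_cell xs (n div 3))"
      using counter_play_GV0[of xs "n div 3", THEN conjunct1] by (simp only: 1[symmetric])
    with v show ?thesis by simp
  next
    case 2
    then have "counter_play xs !! n = GV1 (play_cell xs (n div 3)) (\<sigma> (play_cell xs (n div 3)))"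
      using counter_play_GV1[of xs "n div 3"] by (simp only: 2[symmetric])
    with v show ?thesis by simp
  next
    case 3
    then have "counter_play xs !! n = GVr (p1_choice (play_cell xs (n div 3)) (\<sigma> (play_cell xs (n div 3))))"
      using counter_play_GVr[of xs "n div 3"] by (simp only: 3[symmetric])
    with v show ?thesis by simp
  qed
qed

definition min_prob :: real where "min_prob = 1 / card Sh"

lemma min_prob_pos: "0 < min_prob" and min_prob_le_1: "min_prob \<le> 1"
proof -
  have "0 < card Sh" using c_in_Sh finite_Sh card_gt_0_iff by blast
  then show "0 < min_prob" "min_prob \<le> 1" by (simp_all add: min_prob_def)
qed

lemma play_cell_lucky:
  assumes "(play_cell xs k, m) \<in> (stay_edges C)\<^sup>*" "xs !! Suc (Suc (3 * k)) < min_prob"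
  shows "play_cell xs (Suc k) = next_cell (play_cell xs k)"
proof -
  let ?d = "play_cell xs k"
  let ?R = "p1_choice ?d (\<sigma> ?d)"
  have d: "?d \<in> Sh" using counter_play_GV0 by blast
  have R: "finite ?R" "?R \<noteq> {}"
    using finite_p1_choice[OF d] p1_choice_nonempty by auto
  have "card ?R \<le> card Sh" by (rule card_mono[OF finite_Sh p1_choice_subset_Sh[OF d]])
  moreover have "0 < card ?R" using R card_gt_0_iff by blast
  ultimately have "min_prob \<le> 1 / card ?R" unfolding min_prob_def by (simp add: frac_le)
  then have lucky: "xs !! Suc (Suc (3 * k)) < 1 / card ?R" using assms(2) by simp
  have "next_cell ?d \<in> ?R" using assms(1) by (rule next_cell_in_p1_choice)
  then have "counter_play xs !! Suc (Suc (Suc (3 * k))) = GV0 (next_cell ?d)"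
    by (rule counter_play_lucky[OF counter_play_GV1 counter_play_GVr R(1) _ lucky])
  then show ?thesis using counter_play_GV0[of xs "Suc k", THEN conjunct1] by (simp only: three_Suc) simp
qed

lemma lucky_steps_reach_m:
  "(play_cell xs k, m) \<in> (stay_edges C)\<^sup>* \<Longrightarrow> dist_to_m (play_cell xs k) \<le> j \<Longrightarrow>
    (\<forall>i<j. xs !! Suc (Suc (3 * (k + i))) < min_prob) \<Longrightarrow> \<exists>i\<le>j. play_cell xs (k + i) = m"
proof (induction j arbitrary: k)
  case 0
  then show ?case using dist_to_m_0 by auto
next
  case (Suc j)
  show ?case
  proof (cases "play_cell xs k = m")
    case True then show ?thesis by (intro exI[of _ 0]) simp
  next
    case False
    have step: "play_cell xs (Suc k) = next_cell (play_cell xs k)"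
      using Suc.prems(3)[rule_format, of 0] by (intro play_cell_lucky Suc.prems(1)) simp
    have "(play_cell xs (Suc k), m) \<in> (stay_edges C)\<^sup>*"
      unfolding step using next_cell(2)[OF Suc.prems(1)] .
    moreover have "dist_to_m (play_cell xs (Suc k)) \<le> j"
      unfolding step using next_cell(3)[OF Suc.prems(1) False] Suc.prems(2) by simp
    moreover have "\<forall>i<j. xs !! Suc (Suc (3 * (Suc k + i))) < min_prob"
    proof (intro allI impI)
      fix i assume "i < j"
      then have "xs !! Suc (Suc (3 * (k + Suc i))) < min_prob" using Suc.prems(3) by blast
      then show "xs !! Suc (Suc (3 * (Suc k + i))) < min_prob" by (simp only: add_Suc add_Suc_right)
    qed
    ultimately obtain i where "i \<le> j" "play_cell xs (Suc k + i) = m" using Suc.IH by blast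
    then show ?thesis by (intro exI[of _ "Suc i"]) simp
  qed
qed

definition max_dist :: nat where
  "max_dist = Max (dist_to_m ` {d. (d, m) \<in> (stay_edges C)\<^sup>*})"

lemma dist_to_m_le_max_dist: "(d, m) \<in> (stay_edges C)\<^sup>* \<Longrightarrow> dist_to_m d \<le> max_dist"
  unfolding max_dist_def using finite_dist_to_m by (intro Max_ge) auto

definition block_len :: nat where
  "block_len = 3 * Suc max_dist"

lemma lucky_block_reaches_m:
  assumes lucky: "block_below block_len min_prob (sdrop (q * block_len) xs)"
    and reach: "(play_cell xs (q * Suc max_dist), m) \<in> (stay_edges C)\<^sup>*"
  shows "\<exists>i\<le>max_dist. play_cell xs (q * Suc max_dist + i) = m"
proof (rule lucky_steps_reach_m[OF reach])
  show "dist_to_m (play_cell xs (q * Suc max_dist)) \<le> max_dist"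
    using reach by (rule dist_to_m_le_max_dist)
  show "\<forall>i<max_dist. xs !! Suc (Suc (3 * (q * Suc max_dist + i))) < min_prob"
  proof (intro allI impI)
    fix i assume "i < max_dist"
    then have "Suc (Suc (3 * i)) < block_len" by (simp add: block_len_def)
    then have "sdrop (q * block_len) xs !! Suc (Suc (3 * i)) < min_prob"
      using lucky unfolding block_below_def by blast
    moreover have "q * block_len + Suc (Suc (3 * i)) = Suc (Suc (3 * (q * Suc max_dist + i)))"
      by (simp add: block_len_def algebra_simps)
    ultimately show "xs !! Suc (Suc (3 * (q * Suc max_dist + i))) < min_prob"
      by (simp only: sdrop_snth)
  qed
qed

lemma not_parity_if_m_recurrent_in_C:
  assumes in_C: "\<And>k. k \<ge> k0 \<Longrightarrow> play_cell xs k \<in> C"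
    and m_again: "\<And>j. \<exists>k\<ge>j. play_cell xs k = m"
  shows "\<not> parity l (Bhat Sh B) (counter_play xs)"
proof -
  have m: "m \<in> Sh" "priority m \<in> {1..l}" "m \<subseteq> B (priority m)"
    using m_in_Sh priority_in_range subset_B_priority by auto
  have "\<exists>\<^sub>\<infinity>n. counter_play xs !! n \<in> Bhat Sh B (priority m)"
    unfolding INFM_nat
  proof
    fix n0
    obtain k where k: "k \<ge> Suc n0" "play_cell xs k = m" using m_again by blast
    then have "counter_play xs !! (3 * k) \<in> Bhat Sh B (priority m)"
      using counter_play_GV0[of xs k] m by (simp add: Bhat_def)
    then show "\<exists>n>n0. counter_play xs !! n \<in> Bhat Sh B (priority m)"
      using k(1) by (intro exI[of _ "3 * k"]) simp
  qed
  moreover have "\<not> (\<exists>\<^sub>\<infinity>n. counter_play xs !! n \<in> Bhat Sh B j)"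
    if j: "j \<in> {1..l}" "priority m < j" for j
  proof
    assume "\<exists>\<^sub>\<infinity>n. counter_play xs !! n \<in> Bhat Sh B j"
    then obtain n where n: "n \<ge> 3 * k0" "counter_play xs !! n \<in> Bhat Sh B j"
      by (auto simp: INFM_nat_le)
    then obtain d where d: "d \<in> Sh" "d \<subseteq> B j" "counter_play xs !! n = GV0 d"
      by (auto simp: Bhat_def)
    have "d \<in> C" using counter_play_eq_GV0[OF d(3)] n(1) in_C by simp
    then have "priority d \<le> priority m" by (rule priority_le_m)
    moreover have "priority d = j" using priority_unique[OF d(1) j(1) d(2)] .
    ultimately show False using j(2) by simp
  qed
  ultimately show ?thesis
    unfolding parity_def using m(2) odd_priority_m by auto
qed

text \<open>A lucky first block drives the play into \<open>C\<close>, where it stays; every further lucky block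
  brings it back to \<open>m\<close>.\<close>

lemma counter_play_not_parity:
  assumes first: "block_below block_len min_prob xs" and io: "xs \<in> io_blocks_below block_len min_prob"
  shows "\<not> parity l (Bhat Sh B) (counter_play xs)"
proof -
  have "play_cell xs 0 = c" by (simp add: play_cell_def shd_counter_play)
  then obtain k0 where k0: "play_cell xs k0 = m"
    using lucky_block_reaches_m[of 0 xs] first c_reaches_m by auto
  have in_C: "k \<ge> k0 \<Longrightarrow> play_cell xs k \<in> C" for k
  proof (induction k rule: dec_induct)
    case base then show ?case using k0 m_in_C by simp
  next
    case (step k) then show ?case using play_cell_in_C by blast
  qed
  have m_again: "\<exists>k\<ge>j. play_cell xs k = m" for j
  proof -
    obtain q where q: "q \<ge> max j k0" "block_below block_len min_prob (sdrop (q * block_len) xs)"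
      using io unfolding io_blocks_below_def INFM_nat_le by blast
    have "play_cell xs (q * Suc max_dist) \<in> C" using q(1) by (intro in_C) (simp add: trans_le_add1)
    then obtain i where "play_cell xs (q * Suc max_dist + i) = m"
      using lucky_block_reaches_m[OF q(2)] C_reaches_m by blast
    moreover have "q * Suc max_dist + i \<ge> j" using q(1) by (simp add: trans_le_add1)
    ultimately show ?thesis by blast
  qed
  show ?thesis using in_C m_again by (rule not_parity_if_m_recurrent_in_C)
qed

lemma measurable_counter_play: "counter_play \<in> uniform_streams \<rightarrow>\<^sub>M stream_space (count_space UNIV)"
  unfolding counter_play_def by measurable

lemma counter_play_parity_prob_less_1:
  "measure (run_measure (sampled_hist_measure (counter_step) (preferred_vertex)) (GV0 c))
     {\<omega>. parity l (Bhat Sh B) \<omega>} < 1"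
proof -
  interpret S: prob_space uniform_streams by (rule prob_space_uniform_streams)
  let ?parity = "{\<omega>. parity l (Bhat Sh B) \<omega>}"
  let ?lucky = "{xs. block_below block_len min_prob xs} \<inter> io_blocks_below block_len min_prob"
  have lucky[measurable]: "?lucky \<in> sets uniform_streams"
    by (intro sets.Int sets_uniform_streams_Collect) measurable
  have "run_measure (sampled_hist_measure (counter_step) (preferred_vertex)) (GV0 c) =
      distr uniform_streams (stream_space (count_space UNIV)) (counter_play)"
    unfolding run_measure_def sampled_hist_measure_def counter_play_def
    by (subst distr_distr) (auto simp: comp_def)
  then have "measure (run_measure (sampled_hist_measure (counter_step) (preferred_vertex)) (GV0 c))
      ?parity = S.prob (counter_play -` ?parity)"
    by (simp only:) (subst measure_distr, auto intro: measurable_counter_play sets_parity)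
  also have "\<dots> \<le> S.prob (UNIV - ?lucky)"
    using counter_play_not_parity sets.compl_sets[OF lucky] by (intro S.finite_measure_mono) auto
  also have "\<dots> = 1 - min_prob ^ block_len"
    using S.prob_compl[OF lucky] measure_block_below_io[OF min_prob_pos min_prob_le_1] by simp
  also have "\<dots> < 1" using min_prob_pos by simp
  finally show ?thesis .
qed

end

end

section \<open>The refined policy wins almost surely\<close>

lemma AE_witness: "AE x in M. Q x \<Longrightarrow> \<not> (AE x in M. P x) \<Longrightarrow> \<exists>x. Q x \<and> \<not> P x"
  by (metis (mono_tags, lifting) eventually_mono)

locale refined_path = parity_abstraction T l B Sh Fo Fu \<sigma> c
  for T :: "'s::polish_space \<Rightarrow> 'u::finite \<Rightarrow> 's measure"
    and l B Sh Fo Fu \<sigma> c +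
  fixes P :: "'s \<Rightarrow> 's stream measure"
  assumes path_measure_refined: "is_path_measure (\<lambda>s. T s (refine Sh \<sigma> s)) P"

sublocale refined_path \<subseteq> path_measure "\<lambda>s. T s (refine Sh \<sigma> s)" P
  by (rule path_measure.intro) (rule prob_space_T, rule sets_T, rule path_measure_refined)

context refined_path
begin

lemma refine_in_cell: "d \<in> Sh \<Longrightarrow> s \<in> d \<Longrightarrow> refine Sh \<sigma> s = \<sigma> d"
  by (simp add: refine_def cell_of_eq)

lemma AE_follows_Fo: "AE \<omega> in P s. follows_Fo \<omega>"
proof -
  have "AE \<omega> in P s. \<forall>d\<in>Sh. \<forall>d'\<in>Sh - Fo d (\<sigma> d). \<forall>n. \<not> (\<omega> !! n \<in> d \<and> \<omega> !! Suc n \<in> d')"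
  proof (intro AE_finite_allI finite_Sh finite_Diff)
    fix d d' assume d: "d \<in> Sh" and d': "d' \<in> Sh - Fo d (\<sigma> d)"
    show "AE \<omega> in P s. \<forall>n. \<not> (\<omega> !! n \<in> d \<and> \<omega> !! Suc n \<in> d')"
    proof (rule AE_P_never_step)
      show "d \<in> sets borel" "d' \<in> sets borel" using d d' sets_Sh by auto
      fix s' assume s': "s' \<in> d"
      interpret T: prob_space "T s' (\<sigma> d)" by (rule prob_space_T)
      have "\<not> 0 < measure (T s' (\<sigma> d)) d'" using Fo_if_positive[OF d _ s'] d' by blast
      then have "measure (T s' (\<sigma> d)) d' = 0" using measure_nonneg[of "T s' (\<sigma> d)" d'] by linarith
      then show "emeasure (T s' (refine Sh \<sigma> s')) d' = 0"
        using refine_in_cell[OF d s'] T.emeasure_eq_measure by simp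
    qed
  qed
  then show ?thesis
    unfolding follows_Fo_def
  proof (rule eventually_mono, intro allI)
    fix \<omega> n
    assume never: "\<forall>d\<in>Sh. \<forall>d'\<in>Sh - Fo d (\<sigma> d). \<forall>n. \<not> (\<omega> !! n \<in> d \<and> \<omega> !! Suc n \<in> d')"
    show "cell_of Sh (\<omega> !! Suc n) \<in> Fo (cell_of Sh (\<omega> !! n)) (\<sigma> (cell_of Sh (\<omega> !! n)))"
    proof (rule ccontr)
      assume "cell_of Sh (\<omega> !! Suc n) \<notin> Fo (cell_of Sh (\<omega> !! n)) (\<sigma> (cell_of Sh (\<omega> !! n)))"
      then have "cell_of Sh (\<omega> !! Suc n) \<in> Sh - Fo (cell_of Sh (\<omega> !! n)) (\<sigma> (cell_of Sh (\<omega> !! n)))"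
        using cell_of_in_Sh by blast
      then have "\<not> (\<omega> !! n \<in> cell_of Sh (\<omega> !! n) \<and> \<omega> !! Suc n \<in> cell_of Sh (\<omega> !! Suc n))"
        using never cell_of_in_Sh by blast
      then show False using in_cell_of by blast
    qed
  qed
qed

lemma AE_Fu_fair: "AE \<omega> in P s. Fu_fair \<omega>"
  unfolding Fu_fair_def
proof (intro AE_finite_allI finite_Sh)
  fix d assume d: "d \<in> Sh"
  show "finite (Fu d (\<sigma> d))" using finite_subset[OF Fu_subset_Sh[OF d] finite_Sh] .
next
  fix d d' assume d: "d \<in> Sh" and d': "d' \<in> Fu d (\<sigma> d)"
  obtain \<epsilon> where \<epsilon>: "\<epsilon> > 0" "\<forall>s\<in>d. measure (T s (\<sigma> d)) d' \<ge> \<epsilon>"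
    using Fu_lower_bound[OF d d'] by blast
  show "AE \<omega> in P s. (\<exists>\<^sub>\<infinity>n. \<omega> !! n \<in> d) \<longrightarrow> (\<exists>\<^sub>\<infinity>n. \<omega> !! n \<in> d \<and> \<omega> !! Suc n \<in> d')"
  proof (rule AE_P_infinitely_often_step[of _ _ "min \<epsilon> 1"])
    show "d \<in> sets borel" "d' \<in> sets borel" using d d' sets_Sh Fu_subset_Sh by auto
    show "0 < min \<epsilon> 1" "min \<epsilon> 1 \<le> 1" using \<epsilon> by auto
    fix s' assume s': "s' \<in> d"
    then show "min \<epsilon> 1 \<le> measure (T s' (refine Sh \<sigma> s')) d'"
      using \<epsilon> refine_in_cell[OF d s'] by fastforce
  qed
qed

lemma AE_start: "s \<in> c \<Longrightarrow> AE \<omega> in P s. \<omega> !! 0 \<in> c"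
proof -
  assume s: "s \<in> c"
  have c[measurable]: "c \<in> sets borel" by (rule sets_Sh[OF c_in_Sh])
  show ?thesis
  proof (rule AE_I')
    show "{\<omega>. shd \<omega> \<in> - c} \<in> null_sets (P s)"
      using emeasure_P_shd[of "- c" s] s by (simp add: null_sets_def sets_paths_Collect)
  qed auto
qed

lemma odd_trap_if_not_winning:
  assumes s: "s \<in> c" and losing: "s \<notin> WinDom l B P"
  shows "\<exists>C m. odd_trap C m"
proof -
  interpret Ps: prob_space "P s" by (rule prob_space_P)
  have "{\<omega>. parity l B \<omega>} \<in> sets (P s)" using sets_parity[of l B borel] sets_B by simp
  then have "\<not> (AE \<omega> in P s. parity l B \<omega>)"
    using losing Ps.prob_eq_1 by (simp add: WinDom_def)
  moreover have "AE \<omega> in P s. follows_Fo \<omega> \<and> Fu_fair \<omega> \<and> \<omega> !! 0 \<in> c"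
    using AE_follows_Fo AE_Fu_fair AE_start[OF s] by eventually_elim auto
  ultimately obtain \<omega> where "\<not> parity l B \<omega>" "follows_Fo \<omega>" "Fu_fair \<omega>" "\<omega> !! 0 \<in> c"
    by (blast dest: AE_witness)
  then show ?thesis using odd_trap_of_losing_path by blast
qed

end

theorem theorem4:
  fixes T :: "'s::polish_space \<Rightarrow> 'u::finite \<Rightarrow> 's measure"
    and l :: nat and B :: "nat \<Rightarrow> 's set"
    and Sh :: "'s set set"
    and Fo Fu :: "'s set \<Rightarrow> 'u \<Rightarrow> 's set set"
    and \<sigma> :: "'s set \<Rightarrow> 'u"
    and c :: "'s set"
  assumes "is_CMP T"
    and "is_priority_partition l B"
    and "is_abstraction l B Sh"
    and "valid_F T Sh Fo Fu"
    and "c \<in> Sh"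
    and win: "\<forall>\<pi>1 Q. p1_strategy Sh Fo Fu \<pi>1 \<longrightarrow> is_hist_measure (gstep \<sigma> \<pi>1) Q \<longrightarrow>
                 measure (run_measure Q (GV0 c)) {\<omega>. parity l (Bhat Sh B) \<omega>} = 1"
  shows "\<forall>P. is_path_measure (\<lambda>s. T s (refine Sh \<sigma> s)) P \<longrightarrow> c \<subseteq> WinDom l B P"
proof (intro allI impI subsetI)
  fix P s
  assume "is_path_measure (\<lambda>s. T s (refine Sh \<sigma> s)) P" and s: "s \<in> c"
  then interpret refined_path T l B Sh Fo Fu \<sigma> c P
    using assms(1-5) by unfold_locales
  show "s \<in> WinDom l B P"
  proof (rule ccontr)
    assume "s \<notin> WinDom l B P"
    then obtain C m where trap: "odd_trap C m" using odd_trap_if_not_winning[OF s] by blast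
    have "measure (run_measure (sampled_hist_measure (counter_step C m) (preferred_vertex C m)) (GV0 c))
        {\<omega>. parity l (Bhat Sh B) \<omega>} = 1"
      using win p1_strategy_counter_strategy[OF trap] is_hist_measure_sampled_hist_measure by blast
    with counter_play_parity_prob_less_1[OF trap] show False by simp
  qed
qed

end
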